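(* Let $s\in(0,1)$, $p=1$, $T\in\mathbb{N}$, and let $\mathbf{X}\in\mathbb{X}_T$ have multiplicity $m_i>1$ at $x_i$ for some $i\in\{1,\dots,T\}$, where $m_i=\#\{j\in\{1,\dots,T\}:x_j=x_i\}$. Then there exists $\mathbf{X}'\in\mathbb{X}_T$ with multiplicity $m_i-1$ at $x_i$ such that $\mathcal{F}^s_1[\mathbf{X}]>\mathcal{F}^s_1[\mathbf{X}']$.
   Context: One-dimensional setting. Let $T\in\mathbb{N}$. A configuration is a set $\mathbf{X}=\bigcup_{k\in\mathbb{Z}}(\bar{\mathbf{X}}+kT)$ with $\bar{\mathbf{X}}=(x_1,\dots,x_T)\in[0,T)^T$, $x_i\le x_j$ for $i<j$ (points counted with multiplicity); $\mathbb{X}_T$ is the set of configurations, and the multiplicity of $\mathbf{X}$ at a point $x$ is the number of indices $j\in\{1,\dots,T\}$ with $x_j=x$. For $\mathbf{X}\in\mathbb{X}_T$, $u[\mathbf{X}]$ is the $T$-periodic function (defined up to an additive constant) with distributional derivative $\mathrm{D}u[\mathbf{X}]=\mathcal{L}^1-\sum_{x\in\mathbf{X}}\delta_x$ (multiplicities counted). $\mathcal{F}^s_1[\mathbf{X}]=\int_0^T\int_{\mathbb{R}}\frac{|u[\mathbf{X}](x)-u[\mathbf{X}](y)|}{|x-y|^{1+s}}\,\mathrm{d}y\,\mathrm{d}x$. *)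

theory Defs
  imports "HOL-Analysis.Analysis"
begin

text \<open>A configuration in \<open>\<bbbX>_T\<close> is represented by its sorted fundamental
  tuple \<open>(x_1,\<dots>,x_T)\<close> in \<open>[0,T)\<close>, given as a list (index \<open>i\<close> of the paper
  is list position \<open>i - 1\<close>). The full configuration is the union of all
  translates by \<open>kT\<close>, \<open>k \<in> \<int>\<close>.\<close>
definition config :: "nat \<Rightarrow> real list \<Rightarrow> bool" where
  "config T xs \<longleftrightarrow> length xs = T \<and> sorted xs \<and> (\<forall>x\<in>set xs. 0 \<le> x \<and> x < real T)"

definition mult :: "real list \<Rightarrow> real \<Rightarrow> nat" where
  "mult xs a = length (filter (\<lambda>y. y = a) xs)"

text \<open>A representative of \<open>u[X]\<close>: \<open>u(x) = x - \<Sum>_j \<lfloor>(x - x_j)/T\<rfloor>\<close>.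
  It is \<open>T\<close>-periodic and its distributional derivative is
  \<open>\<L>^1 - \<Sum>_{x \<in> X} \<delta>_x\<close> (multiplicities counted); \<open>u[X]\<close> is only defined up to
  an additive constant, which does not affect the energy.\<close>
definition u_conf :: "nat \<Rightarrow> real list \<Rightarrow> real \<Rightarrow> real" where
  "u_conf T xs x = x - (\<Sum>y\<leftarrow>xs. real_of_int \<lfloor>(x - y) / real T\<rfloor>)"

definition F1 :: "real \<Rightarrow> nat \<Rightarrow> real list \<Rightarrow> ennreal" where
  "F1 s T xs = (\<integral>\<^sup>+ x. indicator {0..real T} x *
      (\<integral>\<^sup>+ y. ennreal (\<bar>u_conf T xs x - u_conf T xs y\<bar> / \<bar>x - y\<bar> powr (1 + s)) \<partial>lborel) \<partial>lborel)"

end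

theory Submission
  imports Defs
begin

text \<open>
  Let \<open>a\<close> be a point of multiplicity \<open>m \<ge> 2\<close> and let \<open>g > 0\<close> be smaller than its distance
  to every other point of \<open>X\<close>. Moving one copy of \<open>a\<close> to \<open>a + t\<close>, resp. to \<open>a - t\<close>, gives
  configurations with profiles \<open>u\<^sub>+ = u + \<chi>\<close> and \<open>u\<^sub>-(\<cdot> - t) = u(\<cdot> - t) - \<chi> + const\<close>, where \<open>\<chi>\<close>
  is the indicator of the periodic windows \<open>[a + kT, a + kT + t)\<close>. Since
  \<open>u(\<cdot> - t) = u - t + m \<chi> + \<omega>\<close>, with \<open>\<omega>\<close> counting the windows of the other points, the two
  increments of \<open>\<chi>\<close> act in opposite directions on \<open>u(x) - u(y)\<close> and \<open>u(x - t) - u(y - t)\<close>,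
  which differ by at least \<open>m \<ge> 2\<close> wherever only \<open>a\<close> is involved. Pointwise, this gives
  \<open>|u\<^sub>+(x) - u\<^sub>+(y)| + |u\<^sub>-(x - t) - u\<^sub>-(y - t)| \<le> |u(x) - u(y)| + |u(x - t) - u(y - t)|\<close>
  up to an error supported on pairs whose difference is within \<open>t\<close> of a difference of
  two distinct points, and with a gain of order \<open>g\<close> for \<open>x \<in> [a, a + t)\<close>,
  \<open>y \<in> [a + g/2, a + g)\<close>. After integration, the gain is of order \<open>t\<close>, while the error is
  \<open>t\<close> times a kernel mass that tends to \<open>0\<close> with \<open>t\<close>. Hence for small \<open>t\<close> the energies of
  the two competitors add up to less than \<open>2 \<F>[X]\<close>, which is finite, and one of them
  is smaller than \<open>\<F>[X]\<close>.
\<close>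

section \<open>Periodic cells and windows\<close>

definition cell :: "real \<Rightarrow> real \<Rightarrow> real \<Rightarrow> int" where
  "cell P c z = \<lfloor>(z - c) / P\<rfloor>"

definition windows :: "real \<Rightarrow> real \<Rightarrow> real \<Rightarrow> real set" where
  "windows P c w = {x. \<exists>k::int. c + k * P \<le> x \<and> x < c + k * P + w}"

lemma cell_bounds:
  assumes P: "0 < P"
  shows "c + real_of_int (cell P c x) * P \<le> x" "x < c + (real_of_int (cell P c x) + 1) * P"
proof -
  have "real_of_int (cell P c x) \<le> (x - c) / P" unfolding cell_def by (rule of_int_floor_le)
  then show "c + real_of_int (cell P c x) * P \<le> x" using P by (simp add: le_divide_eq)
  have "(x - c) / P < real_of_int (cell P c x) + 1"
    unfolding cell_def by (rule real_of_int_floor_add_one_gt)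
  then show "x < c + (real_of_int (cell P c x) + 1) * P" using P by (simp add: divide_less_eq)
qed

lemma cell_eqI:
  assumes P: "0 < P" and "c + real_of_int k * P \<le> x" "x < c + (real_of_int k + 1) * P"
  shows "cell P c x = k"
proof -
  have "real_of_int k \<le> (x - c) / P" using assms by (simp add: le_divide_eq)
  moreover have "(x - c) / P < real_of_int k + 1" using assms by (simp add: divide_less_eq)
  ultimately show ?thesis unfolding cell_def by (simp add: floor_eq_iff)
qed

lemma of_int_mult_less_cancel:
  assumes "0 < P" and "real_of_int j * P < real_of_int k * P"
  shows "j < k"
  using assms by (simp add: mult_less_cancel_right)

lemma cell_diff_eq_indicator:
  assumes P: "0 < P" and w: "0 \<le> w" "w < P"
  shows "real_of_int (cell P c x - cell P c (x - w)) = indicator (windows P c w) x"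
proof -
  define k where "k = cell P c x"
  have k1: "c + k * P \<le> x" and k2: "x < c + (k + 1) * P"
    using cell_bounds[OF P, where c=c and x=x] unfolding k_def by auto
  show ?thesis
  proof (cases "x < c + k * P + w")
    case True
    have "cell P c (x - w) = k - 1"
      by (rule cell_eqI[OF P]) (use True k1 w P in \<open>auto simp: algebra_simps\<close>)
    moreover have "x \<in> windows P c w" unfolding windows_def using True k1 by auto
    ultimately show ?thesis unfolding k_def by simp
  next
    case False
    have "cell P c (x - w) = k"
      by (rule cell_eqI[OF P]) (use False k2 w P in \<open>auto simp: algebra_simps\<close>)
    moreover have "x \<notin> windows P c w"
    proof
      assume "x \<in> windows P c w"
      then obtain j :: int where j: "c + j * P \<le> x" "x < c + j * P + w"
        unfolding windows_def by auto
      have "real_of_int j * P < real_of_int (k + 1) * P" using j k2 by auto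
      then have "j < k + 1" by (rule of_int_mult_less_cancel[OF P])
      moreover have "real_of_int k * P < real_of_int (j + 1) * P"
        using j k1 w by (auto simp: algebra_simps)
      then have "k < j + 1" by (rule of_int_mult_less_cancel[OF P])
      ultimately have "j = k" by simp
      then show False using j False by simp
    qed
    ultimately show ?thesis unfolding k_def by simp
  qed
qed

lemma windows_shift: "windows P (c + real_of_int j * P) w = windows P c w"
proof (intro set_eqI iffI)
  fix x assume "x \<in> windows P (c + real_of_int j * P) w"
  then obtain k :: int where k: "c + j * P + k * P \<le> x" "x < c + j * P + k * P + w"
    unfolding windows_def by auto
  have "c + real_of_int j * P + real_of_int k * P = c + real_of_int (j + k) * P"
    by (simp add: distrib_right)
  then show "x \<in> windows P c w" unfolding windows_def using k by (intro CollectI exI[of _ "j + k"]) simp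
next
  fix x assume "x \<in> windows P c w"
  then obtain k :: int where k: "c + k * P \<le> x" "x < c + k * P + w" unfolding windows_def by auto
  have "c + real_of_int k * P = c + real_of_int j * P + real_of_int (k - j) * P"
    by (simp add: left_diff_distrib)
  then show "x \<in> windows P (c + real_of_int j * P) w"
    unfolding windows_def using k by (intro CollectI exI[of _ "k - j"]) simp
qed

lemma windows_translate: "x + z \<in> windows P c w \<longleftrightarrow> x \<in> windows P (c - z) w"
  unfolding windows_def by (auto simp: algebra_simps)

lemma cell_shift_centre:
  "cell P (p + t) x = cell P p (x - t)" "cell P (p - t) x = cell P p (x + t)"
  unfolding cell_def by (simp_all add: algebra_simps)

lemma cell_centre_add_period:
  assumes "0 < P" shows "cell P (p + P) x = cell P p x - 1"
proof -
  have "(x - (p + P)) / P = (x - p) / P - 1" using assms by (simp add: field_simps)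
  then show ?thesis unfolding cell_def by simp
qed

lemma cell_add_period:
  assumes "0 < P" shows "cell P p (x + P) = cell P p x + 1"
proof -
  have "(x + P - p) / P = (x - p) / P + 1" using assms by (simp add: field_simps)
  then show ?thesis unfolding cell_def by simp
qed

lemma cell_measurable[measurable]: "(\<lambda>z. real_of_int (cell P c z)) \<in> borel_measurable borel"
  unfolding cell_def by measurable

lemma borel_measurable_sum_list[measurable]:
  assumes "\<And>y. f y \<in> borel_measurable M"
  shows "(\<lambda>x. (\<Sum>y\<leftarrow>L. f y x) :: real) \<in> borel_measurable M"
  by (induction L) (use assms in auto)

lemma windows_borel[measurable]: "windows P c w \<in> sets borel"
proof -
  have "windows P c w = (\<Union>k::int. {c + real_of_int k * P..<c + real_of_int k * P + w})"
    unfolding windows_def by auto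
  also have "\<dots> \<in> sets borel" by (intro sets.countable_UN') auto
  finally show ?thesis .
qed

text \<open>A window of length \<open>w \<le> P\<close> meets \<open>[0, P]\<close> in at most three of its translates.\<close>
lemma emeasure_windows_le:
  assumes P: "0 < P" and w: "0 \<le> w" "w \<le> P"
  shows "emeasure lborel ({0..P} \<inter> windows P c w) \<le> ennreal (3 * w)"
proof -
  define c' where "c' = c + real_of_int (- cell P 0 c) * P"
  have c'0: "0 \<le> c'" and c'1: "c' < P"
    using cell_bounds[OF P, where c=0 and x=c] unfolding c'_def by (auto simp: algebra_simps)
  have W: "windows P c w = windows P c' w" unfolding c'_def by (rule windows_shift[symmetric])
  have sub: "{0..P} \<inter> windows P c' w \<subseteq> {c' - P..<c' - P + w} \<union> {c'..<c' + w} \<union> {c' + P..<c' + P + w}"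
  proof
    fix x assume "x \<in> {0..P} \<inter> windows P c' w"
    then obtain k :: int where x: "0 \<le> x" "x \<le> P" "c' + k * P \<le> x" "x < c' + k * P + w"
      unfolding windows_def by auto
    have "real_of_int k * P < real_of_int 2 * P" using x c'0 P by linarith
    then have k1: "k < 2" by (rule of_int_mult_less_cancel[OF P])
    have "real_of_int (-2) * P < real_of_int k * P" using x c'1 w by linarith
    then have k2: "-2 < k" by (rule of_int_mult_less_cancel[OF P])
    have "k = -1 \<or> k = 0 \<or> k = 1" using k1 k2 by linarith
    then show "x \<in> {c' - P..<c' - P + w} \<union> {c'..<c' + w} \<union> {c' + P..<c' + P + w}"
      using x by auto
  qed
  have "emeasure lborel ({0..P} \<inter> windows P c w) \<le>
      emeasure lborel ({c' - P..<c' - P + w} \<union> {c'..<c' + w} \<union> {c' + P..<c' + P + w})"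
    using sub W by (intro emeasure_mono) auto
  also have "\<dots> \<le> emeasure lborel ({c' - P..<c' - P + w} \<union> {c'..<c' + w})
      + emeasure lborel {c' + P..<c' + P + w}"
    by (rule emeasure_subadditive) auto
  also have "\<dots> \<le> emeasure lborel {c' - P..<c' - P + w} + emeasure lborel {c'..<c' + w}
      + emeasure lborel {c' + P..<c' + P + w}"
    by (intro add_mono emeasure_subadditive) auto
  also have "\<dots> = ennreal (3 * w)"
    using w by (simp add: ennreal_plus[symmetric] del: ennreal_plus)
  finally show ?thesis .
qed

lemma sum_list_indicator_nonneg: "0 \<le> (\<Sum>c\<leftarrow>L. indicator (S c) x :: real)"
  by (rule sum_list_nonneg) auto

lemma sum_list_indicator_ge_1:
  assumes "c \<in> set L" "x \<in> S c"
  shows "1 \<le> (\<Sum>c\<leftarrow>L. indicator (S c) x :: real)"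
proof -
  have "indicator (S c) x \<in> set (map (\<lambda>c. indicator (S c) x :: real) L)" using assms(1) by simp
  then have "indicator (S c) x \<le> (\<Sum>c\<leftarrow>L. indicator (S c) x :: real)"
    by (rule member_le_sum_list) auto
  then show ?thesis using assms(2) by simp
qed

lemma sum_list_indicator_eq_0_iff:
  "(\<Sum>c\<leftarrow>L. indicator (S c) x :: real) = 0 \<longleftrightarrow> (\<forall>c\<in>set L. x \<notin> S c)"
  by (subst sum_list_nonneg_eq_0_iff) auto

lemma nn_integral_sum_windows_le:
  assumes P: "0 < P" and w: "0 \<le> w" "w \<le> P"
  shows "(\<integral>\<^sup>+x. indicator {0..P} x * ennreal (\<Sum>c\<leftarrow>L. indicator (windows P c w) x) \<partial>lborel)
     \<le> ennreal (3 * w * real (length L))"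
proof (induction L)
  case Nil then show ?case by simp
next
  case (Cons c L)
  let ?N = "\<lambda>x. \<Sum>c\<leftarrow>L. indicator (windows P c w) x :: real"
  have "(\<integral>\<^sup>+x. indicator {0..P} x * ennreal (\<Sum>c\<leftarrow>c # L. indicator (windows P c w) x) \<partial>lborel)
      = (\<integral>\<^sup>+x. indicator ({0..P} \<inter> windows P c w) x + indicator {0..P} x * ennreal (?N x) \<partial>lborel)"
  proof (intro nn_integral_cong)
    fix x
    have "0 \<le> ?N x" by (rule sum_list_indicator_nonneg)
    then show "indicator {0..P} x * ennreal (\<Sum>c\<leftarrow>c # L. indicator (windows P c w) x)
        = indicator ({0..P} \<inter> windows P c w) x + indicator {0..P} x * ennreal (?N x)"
      by (simp only: list.map sum_list.Cons, subst ennreal_plus) (auto simp: distrib_left indicator_def)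
  qed
  also have "\<dots> = emeasure lborel ({0..P} \<inter> windows P c w)
      + (\<integral>\<^sup>+x. indicator {0..P} x * ennreal (?N x) \<partial>lborel)"
    by (subst nn_integral_add) auto
  also have "\<dots> \<le> ennreal (3 * w) + ennreal (3 * w * real (length L))"
    by (intro add_mono Cons.IH emeasure_windows_le[OF P w])
  also have "\<dots> = ennreal (3 * w * real (length (c # L)))"
    using w by (simp add: ennreal_plus[symmetric] algebra_simps del: ennreal_plus)
  finally show ?case .
qed

lemma nn_integral_cell_jump_le:
  assumes P: "1 \<le> P" and z: "\<bar>z\<bar> < 1"
  shows "(\<integral>\<^sup>+x. indicator {0..P} x * ennreal \<bar>real_of_int (cell P c (x + z)) - real_of_int (cell P c x)\<bar> \<partial>lborel)
     \<le> ennreal (3 * \<bar>z\<bar>)"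
proof -
  obtain c' where jump: "\<And>x. \<bar>real_of_int (cell P c (x + z)) - real_of_int (cell P c x)\<bar> = indicator (windows P c' \<bar>z\<bar>) x"
  proof (cases "0 \<le> z")
    case True
    have "\<bar>real_of_int (cell P c (x + z)) - real_of_int (cell P c x)\<bar> = indicator (windows P (c - z) \<bar>z\<bar>) x" for x
      using cell_diff_eq_indicator[of P z c "x + z"] windows_translate[of x z P c z] P z True
      by (simp add: indicator_def)
    then show ?thesis by (rule that)
  next
    case False
    have "\<bar>real_of_int (cell P c (x + z)) - real_of_int (cell P c x)\<bar> = indicator (windows P c \<bar>z\<bar>) x" for x
      using cell_diff_eq_indicator[of P "- z" c x] P z False by (simp add: abs_minus_commute)
    then show ?thesis by (rule that)
  qed
  have "(\<integral>\<^sup>+x. indicator {0..P} x * ennreal \<bar>real_of_int (cell P c (x + z)) - real_of_int (cell P c x)\<bar> \<partial>lborel)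
      = (\<integral>\<^sup>+x. indicator ({0..P} \<inter> windows P c' \<bar>z\<bar>) x \<partial>lborel)"
    unfolding jump by (intro nn_integral_cong) (auto simp: indicator_def)
  also have "\<dots> = emeasure lborel ({0..P} \<inter> windows P c' \<bar>z\<bar>)" by simp
  also have "\<dots> \<le> ennreal (3 * \<bar>z\<bar>)" by (rule emeasure_windows_le) (use P z in auto)
  finally show ?thesis .
qed

lemma nn_integral_cell_jumps_le:
  assumes P: "1 \<le> P" and z: "\<bar>z\<bar> < 1"
  shows "(\<integral>\<^sup>+x. indicator {0..P} x * ennreal (\<Sum>c\<leftarrow>L. \<bar>real_of_int (cell P c (x + z)) - real_of_int (cell P c x)\<bar>) \<partial>lborel)
     \<le> ennreal (3 * \<bar>z\<bar> * real (length L))"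
proof (induction L)
  case Nil then show ?case by simp
next
  case (Cons c L)
  let ?D = "\<lambda>c x. \<bar>real_of_int (cell P c (x + z)) - real_of_int (cell P c x)\<bar>"
  have "(\<integral>\<^sup>+x. indicator {0..P} x * ennreal (\<Sum>c\<leftarrow>c # L. ?D c x) \<partial>lborel)
      = (\<integral>\<^sup>+x. indicator {0..P} x * ennreal (?D c x)
          + indicator {0..P} x * ennreal (\<Sum>c\<leftarrow>L. ?D c x) \<partial>lborel)"
  proof (intro nn_integral_cong)
    fix x
    have "0 \<le> (\<Sum>c\<leftarrow>L. ?D c x)" by (rule sum_list_nonneg) auto
    then show "indicator {0..P} x * ennreal (\<Sum>c\<leftarrow>c # L. ?D c x)
        = indicator {0..P} x * ennreal (?D c x) + indicator {0..P} x * ennreal (\<Sum>c\<leftarrow>L. ?D c x)"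
      by (simp add: distrib_left)
  qed
  also have "\<dots> = (\<integral>\<^sup>+x. indicator {0..P} x * ennreal (?D c x) \<partial>lborel)
      + (\<integral>\<^sup>+x. indicator {0..P} x * ennreal (\<Sum>c\<leftarrow>L. ?D c x) \<partial>lborel)"
    by (rule nn_integral_add) measurable
  also have "\<dots> \<le> ennreal (3 * \<bar>z\<bar>) + ennreal (3 * \<bar>z\<bar> * real (length L))"
    by (intro add_mono nn_integral_cell_jump_le[OF P z] Cons.IH)
  also have "\<dots> = ennreal (3 * \<bar>z\<bar> * real (length (c # L)))"
    by (simp add: ennreal_plus[symmetric] algebra_simps del: ennreal_plus)
  finally show ?case .
qed

lemma not_int_imp_dist_Ints_pos:
  assumes "\<forall>j::int. w \<noteq> real_of_int j"
  shows "\<exists>\<delta>>0. \<forall>j::int. \<delta> \<le> \<bar>w - real_of_int j\<bar>"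
proof -
  define f where "f = \<lfloor>w\<rfloor>"
  have f1: "real_of_int f < w" using assms of_int_floor_le[of w] unfolding f_def
    by (metis order_le_less)
  have f2: "w < real_of_int f + 1" unfolding f_def by (rule real_of_int_floor_add_one_gt)
  define \<delta> where "\<delta> = min (w - real_of_int f) (real_of_int f + 1 - w)"
  have "\<delta> > 0" unfolding \<delta>_def using f1 f2 by simp
  moreover have "\<delta> \<le> \<bar>w - real_of_int j\<bar>" for j :: int
  proof (cases "j \<le> f")
    case True
    then have "real_of_int j \<le> real_of_int f" by simp
    then show ?thesis unfolding \<delta>_def by linarith
  next
    case False
    then have "real_of_int f + 1 \<le> real_of_int j" by simp
    then show ?thesis unfolding \<delta>_def by linarith
  qed
  ultimately show ?thesis by blast
qed

lemma dist_lattice_pos: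
  assumes P: "0 < P" and "\<forall>j::int. z \<noteq> d + real_of_int j * P"
  shows "\<exists>\<delta>>0. \<forall>j::int. \<delta> \<le> \<bar>z - (d + real_of_int j * P)\<bar>"
proof -
  have "\<forall>j::int. (z - d) / P \<noteq> real_of_int j"
    using assms by (auto simp: field_simps)
  then obtain \<delta> where \<delta>: "\<delta> > 0" "\<forall>j::int. \<delta> \<le> \<bar>(z - d) / P - real_of_int j\<bar>"
    using not_int_imp_dist_Ints_pos by blast
  have "\<bar>z - (d + real_of_int j * P)\<bar> = P * \<bar>(z - d) / P - real_of_int j\<bar>" for j :: int
  proof -
    have "z - (d + real_of_int j * P) = P * ((z - d) / P - real_of_int j)"
      using P by (simp add: field_simps)
    then show ?thesis using P by (simp add: abs_mult)
  qed
  then have "\<forall>j::int. P * \<delta> \<le> \<bar>z - (d + real_of_int j * P)\<bar>"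
    using \<delta> P by (simp add: mult_left_mono)
  then show ?thesis using \<delta> P by (intro exI[of _ "P * \<delta>"]) simp
qed


section \<open>The profile of a configuration\<close>

lemma u_conf_cell: "u_conf T L x = x - (\<Sum>y\<leftarrow>L. real_of_int (cell (real T) y x))"
  unfolding u_conf_def cell_def by simp

lemma u_conf_measurable[measurable]: "u_conf T L \<in> borel_measurable borel"
  unfolding u_conf_def by measurable

lemma u_conf_insort: "u_conf T (insort p L) x = u_conf T L x - real_of_int (cell (real T) p x)"
  unfolding u_conf_cell by (induction L) auto

lemma u_conf_remove1:
  assumes "a \<in> set L"
  shows "u_conf T L x = u_conf T (remove1 a L) x - real_of_int (cell (real T) a x)"
  unfolding u_conf_cell using sum_list_map_remove1[OF assms, of "\<lambda>y. real_of_int (cell (real T) y x)"]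
  by simp

lemma u_conf_periodic:
  assumes "length L = T" "0 < T"
  shows "u_conf T L (x + real T) = u_conf T L x"
proof -
  have "(\<Sum>y\<leftarrow>L. real_of_int (cell (real T) y (x + real T)))
      = (\<Sum>y\<leftarrow>L. real_of_int (cell (real T) y x) + 1)"
    using assms by (simp add: cell_add_period)
  also have "\<dots> = (\<Sum>y\<leftarrow>L. real_of_int (cell (real T) y x)) + real T"
    using assms(1) by (simp add: sum_list_addf sum_list_triv)
  finally show ?thesis unfolding u_conf_cell by simp
qed

lemma u_conf_diff_windows:
  assumes P: "0 < real T" and t: "0 \<le> t" "t < real T"
  shows "u_conf T L z - u_conf T L (z - t) = t - (\<Sum>c\<leftarrow>L. indicator (windows (real T) c t) z)"
proof -
  have "(\<Sum>c\<leftarrow>L. real_of_int (cell (real T) c z)) - (\<Sum>c\<leftarrow>L. real_of_int (cell (real T) c (z - t)))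
      = (\<Sum>c\<leftarrow>L. real_of_int (cell (real T) c z - cell (real T) c (z - t)))"
    by (induction L) auto
  also have "\<dots> = (\<Sum>c\<leftarrow>L. indicator (windows (real T) c t) z)"
    using cell_diff_eq_indicator[OF P t] by simp
  finally show ?thesis unfolding u_conf_cell by simp
qed

lemma u_conf_increment_le:
  "\<bar>u_conf T L x - u_conf T L (x + z)\<bar>
    \<le> \<bar>z\<bar> + (\<Sum>c\<leftarrow>L. \<bar>real_of_int (cell (real T) c (x + z)) - real_of_int (cell (real T) c x)\<bar>)"
proof -
  have "u_conf T L x - u_conf T L (x + z)
      = - z + (\<Sum>c\<leftarrow>L. real_of_int (cell (real T) c (x + z)) - real_of_int (cell (real T) c x))"
    unfolding u_conf_cell sum_list_subtractf by simp
  moreover have "\<bar>\<Sum>c\<leftarrow>L. real_of_int (cell (real T) c (x + z)) - real_of_int (cell (real T) c x)\<bar>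
      \<le> (\<Sum>c\<leftarrow>L. \<bar>real_of_int (cell (real T) c (x + z)) - real_of_int (cell (real T) c x)\<bar>)"
    using sum_list_abs[of "map (\<lambda>c. real_of_int (cell (real T) c (x + z)) - real_of_int (cell (real T) c x)) L"]
    by (simp add: o_def)
  ultimately show ?thesis by linarith
qed

lemma u_conf_eq_sum_frac:
  assumes "length L = T" "0 < T"
  shows "u_conf T L w = (\<Sum>c\<leftarrow>L. c) / real T + (\<Sum>c\<leftarrow>L. frac ((w - c) / real T))"
proof -
  have "(\<Sum>c\<leftarrow>L. (w - c) / real T) = (real (length L) * w - (\<Sum>c\<leftarrow>L. c)) / real T"
    by (induction L) (simp_all add: add_divide_distrib[symmetric] algebra_simps)
  also have "\<dots> = w - (\<Sum>c\<leftarrow>L. c) / real T" using assms by (simp add: field_simps)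
  finally have "(\<Sum>c\<leftarrow>L. (w - c) / real T) = w - (\<Sum>c\<leftarrow>L. c) / real T" .
  then show ?thesis unfolding u_conf_def frac_def sum_list_subtractf by simp
qed

lemma u_conf_oscillation_le:
  assumes "length L = T" "0 < T"
  shows "\<bar>u_conf T L x - u_conf T L y\<bar> \<le> real T"
proof -
  have bounds: "0 \<le> (\<Sum>c\<leftarrow>L. frac ((w - c) / real T)) \<and> (\<Sum>c\<leftarrow>L. frac ((w - c) / real T)) \<le> real T" for w
  proof
    show "0 \<le> (\<Sum>c\<leftarrow>L. frac ((w - c) / real T))" by (rule sum_list_nonneg) (auto simp: frac_ge_0)
    have "(\<Sum>c\<leftarrow>L. frac ((w - c) / real T)) \<le> (\<Sum>c\<leftarrow>L. 1)"
      by (rule sum_list_mono) (simp add: less_imp_le frac_lt_1)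
    then show "(\<Sum>c\<leftarrow>L. frac ((w - c) / real T)) \<le> real T" using assms(1) by (simp add: sum_list_triv)
  qed
  show ?thesis unfolding u_conf_eq_sum_frac[OF assms] using bounds[of x] bounds[of y] by linarith
qed

text \<open>Here \<open>A\<close>, \<open>A'\<close> play the roles of \<open>u(x) - u(y)\<close> and \<open>u(x - t) - u(y - t)\<close>, \<open>cx\<close>, \<open>cy\<close>
  are the indicators of the windows of \<open>a\<close> at \<open>x\<close> and \<open>y\<close>, and \<open>ox\<close>, \<open>oy\<close> count the windows
  of the other points there.\<close>
lemma abs_transfer_le:
  fixes A A' cx cy ox oy m :: real
  assumes c: "cx = 0 \<or> cx = 1" "cy = 0 \<or> cy = 1" and o: "0 \<le> ox" "0 \<le> oy" and m: "2 \<le> m"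
    and AA: "A' = A + (m * cx + ox) - (m * cy + oy)"
  shows "\<bar>A + (cx - cy)\<bar> + \<bar>A' - (cx - cy)\<bar> \<le> \<bar>A\<bar> + \<bar>A'\<bar>
          + 2 * (cx * (if oy = 0 then 0 else 1)) + 2 * (cy * (if ox = 0 then 0 else 1))"
proof -
  consider "cx = 0" "cy = 0" | "cx = 1" "cy = 1" | "cx = 1" "cy = 0" | "cx = 0" "cy = 1"
    using c by blast
  then show ?thesis
  proof cases
    case 3
    show ?thesis
    proof (cases "oy = 0")
      case True
      then have "A' \<ge> A + 2" using AA 3 m o by simp
      then show ?thesis using 3 True by (simp add: abs_if)
    next
      case False
      have "\<bar>A + 1\<bar> \<le> \<bar>A\<bar> + 1" "\<bar>A' - 1\<bar> \<le> \<bar>A'\<bar> + 1" by linarith+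
      then show ?thesis using 3 False by simp
    qed
  next
    case 4
    show ?thesis
    proof (cases "ox = 0")
      case True
      then have "A' \<le> A - 2" using AA 4 m o by simp
      then show ?thesis using 4 True by (simp add: abs_if)
    next
      case False
      have "\<bar>A - 1\<bar> \<le> \<bar>A\<bar> + 1" "\<bar>A' + 1\<bar> \<le> \<bar>A'\<bar> + 1" by linarith+
      then show ?thesis using 4 False by simp
    qed
  qed simp_all
qed

lemma abs_transfer_gain:
  fixes A A' ox m :: real
  assumes "0 \<le> ox" and "2 \<le> m" and "A' = A + (m + ox)" and "-1 \<le> A" "A \<le> 0"
  shows "\<bar>A + 1\<bar> + \<bar>A' - 1\<bar> \<le> \<bar>A\<bar> + \<bar>A'\<bar> + 2 * A"
proof -
  have "A' \<ge> 1" using assms by linarith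
  then show ?thesis using assms by (simp add: abs_if)
qed

definition iterated_integral :: "real set \<Rightarrow> (real \<Rightarrow> real \<Rightarrow> real) \<Rightarrow> ennreal" where
  "iterated_integral S f = (\<integral>\<^sup>+x. indicator S x * (\<integral>\<^sup>+y. ennreal (f x y) \<partial>lborel) \<partial>lborel)"

definition energy :: "real \<Rightarrow> real \<Rightarrow> (real \<Rightarrow> real) \<Rightarrow> ennreal" where
  "energy s P v = iterated_integral {0..P} (\<lambda>x y. \<bar>v x - v y\<bar> / \<bar>x - y\<bar> powr (1 + s))"

lemma F1_eq_energy: "F1 s T xs = energy s (real T) (u_conf T xs)"
  unfolding F1_def energy_def iterated_integral_def by simp

lemma iterated_integral_add:
  assumes [measurable]: "(\<lambda>(x, y). f x y) \<in> borel_measurable (lborel \<Otimes>\<^sub>M lborel)"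
    "(\<lambda>(x, y). h x y) \<in> borel_measurable (lborel \<Otimes>\<^sub>M lborel)" "S \<in> sets borel"
    and nn: "\<And>x y. 0 \<le> f x y" "\<And>x y. 0 \<le> h x y"
  shows "iterated_integral S (\<lambda>x y. f x y + h x y) = iterated_integral S f + iterated_integral S h"
proof -
  have "(\<integral>\<^sup>+y. ennreal (f x y + h x y) \<partial>lborel)
      = (\<integral>\<^sup>+y. ennreal (f x y) \<partial>lborel) + (\<integral>\<^sup>+y. ennreal (h x y) \<partial>lborel)" for x
    using nn by (simp add: nn_integral_add)
  then have "iterated_integral S (\<lambda>x y. f x y + h x y)
      = (\<integral>\<^sup>+x. indicator S x * (\<integral>\<^sup>+y. ennreal (f x y) \<partial>lborel)
          + indicator S x * (\<integral>\<^sup>+y. ennreal (h x y) \<partial>lborel) \<partial>lborel)"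
    unfolding iterated_integral_def by (simp add: distrib_left)
  also have "\<dots> = iterated_integral S f + iterated_integral S h"
    unfolding iterated_integral_def by (rule nn_integral_add) measurable
  finally show ?thesis .
qed

lemma iterated_integral_add3:
  assumes m: "(\<lambda>(x, y). f1 x y) \<in> borel_measurable (lborel \<Otimes>\<^sub>M lborel)"
      "(\<lambda>(x, y). f2 x y) \<in> borel_measurable (lborel \<Otimes>\<^sub>M lborel)"
      "(\<lambda>(x, y). f3 x y) \<in> borel_measurable (lborel \<Otimes>\<^sub>M lborel)"
    and S: "S \<in> sets borel"
    and nn: "\<And>x y. 0 \<le> f1 x y" "\<And>x y. 0 \<le> f2 x y" "\<And>x y. 0 \<le> f3 x y"
  shows "iterated_integral S (\<lambda>x y. f1 x y + f2 x y + f3 x y)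
    = iterated_integral S f1 + iterated_integral S f2 + iterated_integral S f3"
proof -
  have m12: "(\<lambda>(x, y). f1 x y + f2 x y) \<in> borel_measurable (lborel \<Otimes>\<^sub>M lborel)"
    using borel_measurable_add[OF m(1,2)] by (simp add: case_prod_beta')
  have nn12: "\<And>x y. 0 \<le> f1 x y + f2 x y" using nn(1,2) by (simp add: add_nonneg_nonneg)
  show ?thesis
    using iterated_integral_add[OF m12 m(3) S nn12 nn(3)] iterated_integral_add[OF m(1,2) S nn(1,2)]
    by simp
qed

lemma iterated_integral_mono:
  assumes "\<And>x y. f x y \<le> h x y"
  shows "iterated_integral S f \<le> iterated_integral S h"
  unfolding iterated_integral_def
  by (intro nn_integral_mono mult_left_mono ennreal_leI assms) auto

lemma nn_integral_lborel_translate: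
  fixes f :: "real \<Rightarrow> ennreal"
  assumes [measurable]: "f \<in> borel_measurable borel"
  shows "(\<integral>\<^sup>+y. f y \<partial>lborel) = (\<integral>\<^sup>+y. f (y + c) \<partial>lborel)"
  using nn_integral_real_affine[of f 1 c] by (simp add: add.commute)

lemma nn_integral_lborel_reflect:
  fixes f :: "real \<Rightarrow> ennreal"
  assumes [measurable]: "f \<in> borel_measurable borel"
  shows "(\<integral>\<^sup>+y. f (- y) \<partial>lborel) = (\<integral>\<^sup>+y. f y \<partial>lborel)"
  using nn_integral_real_affine[of f "-1" 0] by simp

lemma nn_integral_periodic_shift:
  fixes I :: "real \<Rightarrow> ennreal"
  assumes [measurable]: "I \<in> borel_measurable borel" and per: "\<And>x. I (x + P) = I x"
    and t: "0 \<le> t" "t \<le> P"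
  shows "(\<integral>\<^sup>+x. indicator {0..P} x * I (x - t) \<partial>lborel) = (\<integral>\<^sup>+x. indicator {0..P} x * I x \<partial>lborel)"
proof -
  have "(\<integral>\<^sup>+x. indicator {0..P} x * I (x - t) \<partial>lborel)
      = (\<integral>\<^sup>+x. indicator {0..P} (x + t) * I (x + t - t) \<partial>lborel)"
    by (rule nn_integral_lborel_translate) measurable
  also have "\<dots> = (\<integral>\<^sup>+x. indicator {-t..<0} x * I x + indicator {0..P-t} x * I x \<partial>lborel)"
    using t by (intro nn_integral_cong) (auto simp: indicator_def)
  also have "\<dots> = (\<integral>\<^sup>+x. indicator {-t..<0} x * I x \<partial>lborel)
      + (\<integral>\<^sup>+x. indicator {0..P-t} x * I x \<partial>lborel)"
    by (rule nn_integral_add) measurable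
  also have "(\<integral>\<^sup>+x. indicator {-t..<0} x * I x \<partial>lborel)
      = (\<integral>\<^sup>+x. indicator {-t..<0} (x + - P) * I (x + - P) \<partial>lborel)"
    by (rule nn_integral_lborel_translate) measurable
  also have "\<dots> = (\<integral>\<^sup>+x. indicator {P-t..<P} x * I x \<partial>lborel)"
  proof (intro nn_integral_cong)
    fix x
    have "I (x + - P) = I x" using per[of "x - P"] by simp
    then show "indicator {-t..<0} (x + - P) * I (x + - P) = indicator {P-t..<P} x * I x"
      by (auto simp: indicator_def)
  qed
  also have "(\<integral>\<^sup>+x. indicator {P-t..<P} x * I x \<partial>lborel) + (\<integral>\<^sup>+x. indicator {0..P-t} x * I x \<partial>lborel)
      = (\<integral>\<^sup>+x. indicator {P-t..<P} x * I x + indicator {0..P-t} x * I x \<partial>lborel)"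
    by (rule nn_integral_add[symmetric]) measurable
  also have "\<dots> = (\<integral>\<^sup>+x. indicator {0..P} x * I x \<partial>lborel)"
  proof (rule nn_integral_cong_AE)
    have "AE x in lborel. x \<noteq> P - t" "AE x in lborel. x \<noteq> P" by (rule AE_lborel_singleton)+
    then show "AE x in lborel. indicator {P-t..<P} x * I x + indicator {0..P-t} x * I x
        = indicator {0..P} x * I x"
      by eventually_elim (use t in \<open>auto simp: indicator_def\<close>)
  qed
  finally show ?thesis .
qed

lemma energy_shift:
  assumes [measurable]: "v \<in> borel_measurable borel" and per: "\<And>x. v (x + P) = v x"
    and t: "0 \<le> t" "t \<le> P"
  shows "iterated_integral {0..P} (\<lambda>x y. \<bar>v (x - t) - v (y - t)\<bar> / \<bar>x - y\<bar> powr (1 + s))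
    = energy s P v"
proof -
  define J where "J x = (\<integral>\<^sup>+ y. ennreal (\<bar>v x - v y\<bar> / \<bar>x - y\<bar> powr (1 + s)) \<partial>lborel)" for x
  have [measurable]: "J \<in> borel_measurable borel" unfolding J_def by measurable
  have shifted: "(\<integral>\<^sup>+ y. ennreal (\<bar>v (x - t) - v (y - t)\<bar> / \<bar>x - y\<bar> powr (1 + s)) \<partial>lborel)
      = J (x - t)" for x
  proof -
    have "(\<integral>\<^sup>+ y. ennreal (\<bar>v (x - t) - v (y - t)\<bar> / \<bar>x - y\<bar> powr (1 + s)) \<partial>lborel)
        = (\<integral>\<^sup>+ y. ennreal (\<bar>v (x - t) - v (y + t - t)\<bar> / \<bar>x - (y + t)\<bar> powr (1 + s)) \<partial>lborel)"
      by (rule nn_integral_lborel_translate) measurable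
    then show ?thesis unfolding J_def by (simp add: algebra_simps)
  qed
  have "J (x + P) = J x" for x
  proof -
    have "J (x + P)
        = (\<integral>\<^sup>+ y. ennreal (\<bar>v (x + P) - v (y + P)\<bar> / \<bar>x + P - (y + P)\<bar> powr (1 + s)) \<partial>lborel)"
      unfolding J_def by (rule nn_integral_lborel_translate) measurable
    then show ?thesis unfolding J_def per by simp
  qed
  then show ?thesis
    unfolding energy_def iterated_integral_def shifted J_def[symmetric]
    by (intro nn_integral_periodic_shift t) auto
qed

section \<open>Finiteness of the energy\<close>

lemma nn_integral_powr_01:
  assumes s: "0 < s" "s < 1"
  shows "(\<integral>\<^sup>+z. ennreal (indicator {0..1} z * z powr (- s)) \<partial>lborel) = ennreal (1 / (1 - s))"
proof -
  have "((\<lambda>x. x powr (- s)) has_integral (1 powr (- s + 1) / (- s + 1))) {0..1}"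
    by (rule has_integral_powr_from_0) (use s in auto)
  then have "((\<lambda>x. if x \<in> {0..1} then x powr (- s) else 0) has_integral (1 / (1 - s))) UNIV"
    by (subst has_integral_restrict_UNIV) simp
  moreover have "(\<lambda>x. if x \<in> {0..1} then x powr (- s) else 0) = (\<lambda>z. indicator {0..1} z * z powr (- s))"
    by (auto simp: indicator_def)
  ultimately show ?thesis
    by (intro nn_integral_has_integral_lborel) auto
qed

lemma nn_integral_powr_tail:
  assumes s: "0 < s" and r: "0 < r"
  shows "(\<integral>\<^sup>+z. ennreal (indicator {r..} z * z powr (- 1 - s)) \<partial>lborel) = ennreal (r powr (- s) / s)"
proof -
  have "((\<lambda>x. x powr (- 1 - s)) has_integral - (r powr (- 1 - s + 1)) / (- 1 - s + 1)) {r..}"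
    by (rule has_integral_powr_to_inf) (use s r in auto)
  then have "((\<lambda>x. if x \<in> {r..} then x powr (- 1 - s) else 0) has_integral (r powr (- s) / s)) UNIV"
    by (subst has_integral_restrict_UNIV) simp
  moreover have "(\<lambda>x. if x \<in> {r..} then x powr (- 1 - s) else 0) = (\<lambda>z. indicator {r..} z * z powr (- 1 - s))"
    by (auto simp: indicator_def)
  ultimately show ?thesis
    by (intro nn_integral_has_integral_lborel) (use r in auto)
qed

lemma nn_integral_abs_powr_near_finite:
  assumes s: "0 < s" "s < 1"
  shows "(\<integral>\<^sup>+z. ennreal (indicator {z. \<bar>z\<bar> < 1} z * \<bar>z\<bar> powr (- s)) \<partial>lborel) < \<infinity>"
proof -
  let ?h = "\<lambda>z::real. ennreal (indicator {0..1} z * z powr (- s))"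
  have "(\<integral>\<^sup>+z. ennreal (indicator {z. \<bar>z\<bar> < 1} z * \<bar>z\<bar> powr (- s)) \<partial>lborel)
      \<le> (\<integral>\<^sup>+z. ?h z + ?h (- z) \<partial>lborel)"
    by (intro nn_integral_mono) (auto simp: indicator_def)
  also have "\<dots> = (\<integral>\<^sup>+z. ?h z \<partial>lborel) + (\<integral>\<^sup>+z. ?h (- z) \<partial>lborel)"
    by (rule nn_integral_add) auto
  also have "(\<integral>\<^sup>+z. ?h (- z) \<partial>lborel) = (\<integral>\<^sup>+z. ?h z \<partial>lborel)"
    by (rule nn_integral_lborel_reflect) auto
  also have "(\<integral>\<^sup>+z. ?h z \<partial>lborel) + (\<integral>\<^sup>+z. ?h z \<partial>lborel) < \<infinity>"
    unfolding nn_integral_powr_01[OF s] by (simp add: ennreal_plus[symmetric] del: ennreal_plus)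
  finally show ?thesis .
qed

lemma nn_integral_abs_powr_tail_finite:
  assumes s: "0 < s" and r: "0 < r"
  shows "(\<integral>\<^sup>+z. ennreal (indicator {z. r \<le> \<bar>z\<bar>} z * \<bar>z\<bar> powr (- 1 - s)) \<partial>lborel) < \<infinity>"
proof -
  let ?h = "\<lambda>z::real. ennreal (indicator {r..} z * z powr (- 1 - s))"
  have "(\<integral>\<^sup>+z. ennreal (indicator {z. r \<le> \<bar>z\<bar>} z * \<bar>z\<bar> powr (- 1 - s)) \<partial>lborel)
      \<le> (\<integral>\<^sup>+z. ?h z + ?h (- z) \<partial>lborel)"
    by (intro nn_integral_mono) (use r in \<open>auto simp: indicator_def\<close>)
  also have "\<dots> = (\<integral>\<^sup>+z. ?h z \<partial>lborel) + (\<integral>\<^sup>+z. ?h (- z) \<partial>lborel)"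
    by (rule nn_integral_add) auto
  also have "(\<integral>\<^sup>+z. ?h (- z) \<partial>lborel) = (\<integral>\<^sup>+z. ?h z \<partial>lborel)"
    by (rule nn_integral_lborel_reflect) auto
  also have "(\<integral>\<^sup>+z. ?h z \<partial>lborel) + (\<integral>\<^sup>+z. ?h z \<partial>lborel) < \<infinity>"
    unfolding nn_integral_powr_tail[OF s r] by (simp add: ennreal_plus[symmetric] del: ennreal_plus)
  finally show ?thesis .
qed

lemma nn_integral_u_conf_increment_le:
  assumes T: "0 < T" and len: "length L = T" and z: "\<bar>z\<bar> < 1"
  shows "(\<integral>\<^sup>+x. indicator {0..real T} x * ennreal \<bar>u_conf T L x - u_conf T L (x + z)\<bar> \<partial>lborel)
    \<le> ennreal (4 * real T * \<bar>z\<bar>)"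
proof -
  let ?J = "\<lambda>x. \<Sum>c\<leftarrow>L. \<bar>real_of_int (cell (real T) c (x + z)) - real_of_int (cell (real T) c x)\<bar>"
  have P1: "1 \<le> real T" using T by simp
  have "(\<integral>\<^sup>+x. indicator {0..real T} x * ennreal \<bar>u_conf T L x - u_conf T L (x + z)\<bar> \<partial>lborel)
      \<le> (\<integral>\<^sup>+x. ennreal \<bar>z\<bar> * indicator {0..real T} x
          + indicator {0..real T} x * ennreal (?J x) \<partial>lborel)"
  proof (intro nn_integral_mono)
    fix x
    have "0 \<le> ?J x" by (rule sum_list_nonneg) auto
    then have "ennreal \<bar>u_conf T L x - u_conf T L (x + z)\<bar> \<le> ennreal \<bar>z\<bar> + ennreal (?J x)"
      using u_conf_increment_le[of T L x z] by (simp add: ennreal_plus[symmetric] del: ennreal_plus)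
    then show "indicator {0..real T} x * ennreal \<bar>u_conf T L x - u_conf T L (x + z)\<bar>
        \<le> ennreal \<bar>z\<bar> * indicator {0..real T} x + indicator {0..real T} x * ennreal (?J x)"
      by (cases "x \<in> {0..real T}") auto
  qed
  also have "\<dots> = ennreal \<bar>z\<bar> * ennreal (real T)
      + (\<integral>\<^sup>+x. indicator {0..real T} x * ennreal (?J x) \<partial>lborel)"
    by (subst nn_integral_add) (auto simp: nn_integral_cmult_indicator)
  also have "\<dots> \<le> ennreal \<bar>z\<bar> * ennreal (real T) + ennreal (3 * \<bar>z\<bar> * real (length L))"
    by (intro add_left_mono nn_integral_cell_jumps_le[OF P1 z])
  also have "\<dots> = ennreal (4 * real T * \<bar>z\<bar>)"
    using len by (simp add: ennreal_mult[symmetric] ennreal_plus[symmetric] algebra_simps del: ennreal_plus)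
  finally show ?thesis .
qed

lemma energy_eq_increments:
  assumes [measurable]: "v \<in> borel_measurable borel"
  shows "energy s P v = (\<integral>\<^sup>+x. (\<integral>\<^sup>+z. ennreal (\<bar>z\<bar> powr (- 1 - s))
      * (indicator {0..P} x * ennreal \<bar>v x - v (x + z)\<bar>) \<partial>lborel) \<partial>lborel)"
proof -
  have kernel: "\<bar>v x - v (z + x)\<bar> / \<bar>x - (z + x)\<bar> powr (1 + s)
      = \<bar>v x - v (x + z)\<bar> * \<bar>z\<bar> powr (- 1 - s)" for x z
  proof -
    have "\<bar>x - (z + x)\<bar> = \<bar>z\<bar>" "v (z + x) = v (x + z)" by (simp_all add: add.commute)
    moreover have "\<bar>z\<bar> powr (- 1 - s) = 1 / \<bar>z\<bar> powr (1 + s)"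
      using powr_minus_divide[of "\<bar>z\<bar>" "1 + s"] by simp
    ultimately show ?thesis by simp
  qed
  show ?thesis unfolding energy_def iterated_integral_def
  proof (intro nn_integral_cong)
    fix x
    have "(\<integral>\<^sup>+y. ennreal (\<bar>v x - v y\<bar> / \<bar>x - y\<bar> powr (1 + s)) \<partial>lborel)
        = (\<integral>\<^sup>+z. ennreal (\<bar>v x - v (x + z)\<bar> * \<bar>z\<bar> powr (- 1 - s)) \<partial>lborel)"
      unfolding kernel[symmetric] by (rule nn_integral_lborel_translate) measurable
    then have "indicator {0..P} x * (\<integral>\<^sup>+y. ennreal (\<bar>v x - v y\<bar> / \<bar>x - y\<bar> powr (1 + s)) \<partial>lborel)
        = indicator {0..P} x * (\<integral>\<^sup>+z. ennreal (\<bar>v x - v (x + z)\<bar> * \<bar>z\<bar> powr (- 1 - s)) \<partial>lborel)"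
      by simp
    also have "\<dots>
        = (\<integral>\<^sup>+z. indicator {0..P} x * ennreal (\<bar>v x - v (x + z)\<bar> * \<bar>z\<bar> powr (- 1 - s)) \<partial>lborel)"
      by (rule nn_integral_cmult[symmetric]) measurable
    also have "\<dots> = (\<integral>\<^sup>+z. ennreal (\<bar>z\<bar> powr (- 1 - s))
        * (indicator {0..P} x * ennreal \<bar>v x - v (x + z)\<bar>) \<partial>lborel)"
      by (intro nn_integral_cong) (simp add: ennreal_mult' mult_ac)
    finally show "indicator {0..P} x * (\<integral>\<^sup>+y. ennreal (\<bar>v x - v y\<bar> / \<bar>x - y\<bar> powr (1 + s)) \<partial>lborel)
        = (\<integral>\<^sup>+z. ennreal (\<bar>z\<bar> powr (- 1 - s)) * (indicator {0..P} x * ennreal \<bar>v x - v (x + z)\<bar>) \<partial>lborel)" .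
  qed
qed

lemma nn_integral_kernel_weight_finite:
  assumes s: "0 < s" "s < 1" and AB: "0 \<le> A" "0 \<le> B"
  shows "(\<integral>\<^sup>+z. ennreal (\<bar>z\<bar> powr (- 1 - s) * (if \<bar>z\<bar> < 1 then A * \<bar>z\<bar> else B)) \<partial>lborel) < \<infinity>"
proof -
  have "(\<integral>\<^sup>+z. ennreal (\<bar>z\<bar> powr (- 1 - s) * (if \<bar>z\<bar> < 1 then A * \<bar>z\<bar> else B)) \<partial>lborel)
      = (\<integral>\<^sup>+z. ennreal A * ennreal (indicator {z. \<bar>z\<bar> < 1} z * \<bar>z\<bar> powr (- s))
          + ennreal B * ennreal (indicator {z. 1 \<le> \<bar>z\<bar>} z * \<bar>z\<bar> powr (- 1 - s)) \<partial>lborel)"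
  proof (intro nn_integral_cong)
    fix z :: real
    have "\<bar>z\<bar> * \<bar>z\<bar> powr (- 1 - s) = \<bar>z\<bar> powr (- s)"
      by (cases "z = 0") (simp_all add: powr_mult_base)
    then have "\<bar>z\<bar> powr (- 1 - s) * (if \<bar>z\<bar> < 1 then A * \<bar>z\<bar> else B)
        = A * (indicator {z. \<bar>z\<bar> < 1} z * \<bar>z\<bar> powr (- s))
          + B * (indicator {z. 1 \<le> \<bar>z\<bar>} z * \<bar>z\<bar> powr (- 1 - s))"
      by (simp add: indicator_def mult_ac)
    then show "ennreal (\<bar>z\<bar> powr (- 1 - s) * (if \<bar>z\<bar> < 1 then A * \<bar>z\<bar> else B))
        = ennreal A * ennreal (indicator {z. \<bar>z\<bar> < 1} z * \<bar>z\<bar> powr (- s))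
          + ennreal B * ennreal (indicator {z. 1 \<le> \<bar>z\<bar>} z * \<bar>z\<bar> powr (- 1 - s))"
      using AB by (simp add: ennreal_mult[symmetric] ennreal_plus[symmetric] del: ennreal_plus)
  qed
  also have "\<dots> = ennreal A * (\<integral>\<^sup>+z. ennreal (indicator {z. \<bar>z\<bar> < 1} z * \<bar>z\<bar> powr (- s)) \<partial>lborel)
      + ennreal B * (\<integral>\<^sup>+z. ennreal (indicator {z. 1 \<le> \<bar>z\<bar>} z * \<bar>z\<bar> powr (- 1 - s)) \<partial>lborel)"
    by (subst nn_integral_add) (auto simp: nn_integral_cmult)
  also have "\<dots> < \<infinity>"
    using nn_integral_abs_powr_near_finite[OF s] nn_integral_abs_powr_tail_finite[OF s(1), of 1]
    by (simp add: ennreal_mult_less_top)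
  finally show ?thesis .
qed

lemma energy_finite:
  assumes s: "0 < s" "s < 1" and T: "0 < T" and len: "length L = T"
  shows "energy s (real T) (u_conf T L) < \<infinity>"
proof -
  let ?P = "real T" and ?u = "u_conf T L"
  define k where "k z = \<bar>z\<bar> powr (- 1 - s)" for z :: real
  define D where "D x z = indicator {0..?P} x * ennreal \<bar>?u x - ?u (x + z)\<bar>" for x z
  define \<beta> where "\<beta> z = (if \<bar>z\<bar> < 1 then 4 * ?P * \<bar>z\<bar> else ?P * ?P)" for z
  have [measurable]: "(\<lambda>(x, z). D x z) \<in> borel_measurable (lborel \<Otimes>\<^sub>M lborel)"
    unfolding D_def by measurable
  have k_nonneg: "0 \<le> k z" for z unfolding k_def by simp
  have "energy s ?P ?u = (\<integral>\<^sup>+x. (\<integral>\<^sup>+z. ennreal (k z) * D x z \<partial>lborel) \<partial>lborel)"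
    unfolding k_def D_def by (rule energy_eq_increments) measurable
  also have "\<dots> = (\<integral>\<^sup>+z. (\<integral>\<^sup>+x. ennreal (k z) * D x z \<partial>lborel) \<partial>lborel)"
    by (rule lborel_pair.Fubini') (unfold k_def, measurable)
  also have "\<dots> = (\<integral>\<^sup>+z. ennreal (k z) * (\<integral>\<^sup>+x. D x z \<partial>lborel) \<partial>lborel)"
    by (intro nn_integral_cong nn_integral_cmult) (unfold D_def, measurable)
  also have "\<dots> \<le> (\<integral>\<^sup>+z. ennreal (k z * \<beta> z) \<partial>lborel)"
  proof (intro nn_integral_mono)
    fix z
    have "(\<integral>\<^sup>+x. D x z \<partial>lborel) \<le> ennreal (\<beta> z)"
    proof (cases "\<bar>z\<bar> < 1")
      case True
      then show ?thesis
        unfolding D_def \<beta>_def using nn_integral_u_conf_increment_le[OF T len True] by simp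
    next
      case False
      have "(\<integral>\<^sup>+x. D x z \<partial>lborel) \<le> (\<integral>\<^sup>+x. ennreal ?P * indicator {0..?P} x \<partial>lborel)"
        unfolding D_def using u_conf_oscillation_le[OF len T]
        by (intro nn_integral_mono) (simp add: indicator_def ennreal_leI)
      also have "\<dots> = ennreal (\<beta> z)"
        unfolding \<beta>_def using False by (simp add: nn_integral_cmult_indicator ennreal_mult)
      finally show ?thesis .
    qed
    moreover have "ennreal (k z * \<beta> z) = ennreal (k z) * ennreal (\<beta> z)"
      using k_nonneg[of z] by (intro ennreal_mult) (auto simp: \<beta>_def)
    ultimately show "ennreal (k z) * (\<integral>\<^sup>+x. D x z \<partial>lborel) \<le> ennreal (k z * \<beta> z)"
      by (simp add: mult_left_mono)
  qed
  also have "\<dots> < \<infinity>"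
    unfolding k_def \<beta>_def by (rule nn_integral_kernel_weight_finite) (use s in auto)
  finally show ?thesis .
qed

lemma config_insort:
  assumes cfg: "config T xs" and a: "a \<in> set xs" and p: "0 \<le> p" "p < real T"
  shows "config T (insort p (remove1 a xs))"
proof -
  have "set (remove1 a xs) \<subseteq> set xs" by (rule set_remove1_subset)
  then show ?thesis using cfg a p unfolding config_def
    by (auto simp: length_insort length_remove1 sorted_insort sorted_remove1 set_insort_key)
qed

lemma mult_insort:
  assumes "a \<in> set xs" and "p \<noteq> a"
  shows "mult (insort p (remove1 a xs)) a = mult xs a - 1"
proof -
  have "length (filter (\<lambda>y. y = a) (insort p L)) = length (filter (\<lambda>y. y = a) L)" for L
    using assms(2) by (induction L) auto
  moreover have "length (filter (\<lambda>y. y = a) (remove1 a xs)) = length (filter (\<lambda>y. y = a) xs) - 1"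
    using assms(1) by (induction xs) auto
  ultimately show ?thesis unfolding mult_def by simp
qed

lemma isolated_point_gap:
  assumes cfg: "config T xs" and a: "a \<in> set xs"
  obtains g where "0 < g" "g \<le> 1"
    "\<And>c k. c \<in> set xs \<Longrightarrow> c \<noteq> a \<or> k \<noteq> 0 \<Longrightarrow> g < \<bar>c + real_of_int k * real T - a\<bar>"
proof -
  let ?P = "real T"
  have range: "\<And>x. x \<in> set xs \<Longrightarrow> 0 \<le> x \<and> x < ?P" using cfg unfolding config_def by auto
  then have P1: "1 \<le> ?P" using a by fastforce
  define \<delta> where "\<delta> = Min (insert 1 ((\<lambda>c. min \<bar>c - a\<bar> (?P - \<bar>c - a\<bar>)) ` (set xs - {a})))"
  have fin: "finite (insert 1 ((\<lambda>c. min \<bar>c - a\<bar> (?P - \<bar>c - a\<bar>)) ` (set xs - {a})))" by simp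
  have \<delta>_pos: "0 < \<delta>"
  proof -
    have "\<bar>c - a\<bar> < ?P" if "c \<in> set xs" for c using range[OF that] range[OF a] by linarith
    then show ?thesis unfolding \<delta>_def using fin by (subst Min_gr_iff) auto
  qed
  have \<delta>_le_1: "\<delta> \<le> 1" unfolding \<delta>_def using fin by (intro Min_le) auto
  have \<delta>_le: "\<delta> \<le> min \<bar>c - a\<bar> (?P - \<bar>c - a\<bar>)" if "c \<in> set xs" "c \<noteq> a" for c
    unfolding \<delta>_def using fin that by (intro Min_le) auto
  have "\<delta> / 2 < \<bar>c + real_of_int k * ?P - a\<bar>" if c: "c \<in> set xs" and ck: "c \<noteq> a \<or> k \<noteq> 0" for c k
  proof (cases "k = 0")
    case True
    then show ?thesis using \<delta>_le[OF c] ck \<delta>_pos by auto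
  next
    case False
    then have "1 \<le> \<bar>real_of_int k\<bar>" by linarith
    then have "?P \<le> \<bar>real_of_int k * ?P\<bar>" using P1 by (simp add: abs_mult)
    moreover have "\<bar>real_of_int k * ?P\<bar> - \<bar>c - a\<bar> \<le> \<bar>c + real_of_int k * ?P - a\<bar>" by linarith
    moreover have "\<bar>c - a\<bar> + \<delta> \<le> ?P" if "c \<noteq> a" using \<delta>_le[OF c that] by linarith
    ultimately show ?thesis using \<delta>_le_1 \<delta>_pos P1 by (cases "c = a") auto
  qed
  then show ?thesis using \<delta>_pos \<delta>_le_1 by (intro that[of "\<delta> / 2"]) auto
qed

section \<open>Moving one copy of a multiple point\<close>

locale multiple_point =
  fixes s :: real and T :: nat and xs :: "real list" and a :: real and g :: real
  assumes s: "0 < s" "s < 1"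
    and cfg: "config T xs" and a_in: "a \<in> set xs" and mult_a: "2 \<le> mult xs a"
    and g: "0 < g" "g \<le> 1"
    and gap: "\<And>c k. c \<in> set xs \<Longrightarrow> c \<noteq> a \<or> k \<noteq> 0 \<Longrightarrow> g < \<bar>c + real_of_int k * real T - a\<bar>"
begin

abbreviation "P \<equiv> real T"
abbreviation "u \<equiv> u_conf T xs"
abbreviation "rest \<equiv> remove1 a xs"

definition a_left :: "real \<Rightarrow> real" where
  "a_left t = (if t \<le> a then a - t else a - t + P)"

definition xs_right :: "real \<Rightarrow> real list" where
  "xs_right t = insort (a + t) rest"

definition xs_left :: "real \<Rightarrow> real list" where
  "xs_left t = insort (a_left t) rest"

abbreviation "u_right t \<equiv> u_conf T (xs_right t)"
abbreviation "u_left t \<equiv> u_conf T (xs_left t)"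

definition ma :: real where
  "ma = real (mult xs a)"

definition ind_a :: "real \<Rightarrow> real \<Rightarrow> real" where
  "ind_a t z = indicator (windows P a t) z"

definition ind_others :: "real \<Rightarrow> real \<Rightarrow> real" where
  "ind_others t z = (\<Sum>c\<leftarrow>filter (\<lambda>c. c \<noteq> a) xs. indicator (windows P c t) z)"

definition collision_set :: "real \<Rightarrow> real set" where
  "collision_set t = {z. \<exists>c\<in>set xs. c \<noteq> a \<and>
      (\<exists>j::int. \<bar>z - (c - a + j * P)\<bar> < t \<or> \<bar>z + (c - a + j * P)\<bar> < t)}"

lemma length_xs: "length xs = T" and xs_range: "\<And>x. x \<in> set xs \<Longrightarrow> 0 \<le> x \<and> x < P"
  using cfg unfolding config_def by auto

lemma a_range: "0 \<le> a" "a < P" using xs_range[OF a_in] by auto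

lemma T_pos: "0 < T" using a_range by linarith

lemma P_pos: "0 < P" using T_pos by simp

lemma g_less_P: "g < P"
  using gap[OF a_in, of 1] by simp

lemma ma_ge_2: "2 \<le> ma" unfolding ma_def using mult_a by simp

lemma u_periodic: "u (x + P) = u x"
  by (rule u_conf_periodic) (use length_xs T_pos in auto)

lemma u_left_periodic: "u_left t (x + P) = u_left t x"
  unfolding xs_left_def
  by (rule u_conf_periodic) (use a_in length_xs T_pos in \<open>auto simp: length_insort length_remove1\<close>)

lemma u_right_eq:
  assumes "0 \<le> t" "t < P"
  shows "u_right t z = u z + ind_a t z"
  using cell_diff_eq_indicator[OF P_pos assms, of a z] u_conf_remove1[OF a_in, of T z]
  unfolding xs_right_def u_conf_insort cell_shift_centre ind_a_def by simp

lemma u_left_eq: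
  assumes "0 \<le> t" "t < P"
  shows "u_left t z = u z - ind_a t (z + t) + (if t \<le> a then 0 else 1)"
proof -
  have "cell P (a_left t) z = cell P a (z + t) - (if t \<le> a then 0 else 1)"
    unfolding a_left_def using cell_centre_add_period[OF P_pos, of "a - t" z]
    by (simp add: cell_shift_centre)
  moreover have "real_of_int (cell P a (z + t) - cell P a z) = ind_a t (z + t)"
    using cell_diff_eq_indicator[OF P_pos assms, of a "z + t"] unfolding ind_a_def by simp
  ultimately show ?thesis
    using u_conf_remove1[OF a_in, of T z] unfolding xs_left_def u_conf_insort by simp
qed

lemma u_shift_eq:
  assumes "0 \<le> t" "t < P"
  shows "u (z - t) = u z - t + (ma * ind_a t z + ind_others t z)"
proof -
  have "(\<Sum>c\<leftarrow>xs. indicator (windows P c t) z :: real) = ma * ind_a t z + ind_others t z"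
    unfolding ma_def ind_a_def ind_others_def mult_def
    by (induction xs) (auto simp: algebra_simps)
  then show ?thesis using u_conf_diff_windows[OF P_pos assms, of xs z] by simp
qed

lemma ind_a_01: "ind_a t z = 0 \<or> ind_a t z = 1"
  unfolding ind_a_def by (simp add: indicator_def)

lemma ind_others_nonneg: "0 \<le> ind_others t z"
  unfolding ind_others_def by (rule sum_list_indicator_nonneg)

lemma ind_a_measurable[measurable]: "ind_a t \<in> borel_measurable borel"
  unfolding ind_a_def by measurable

lemma ind_others_measurable[measurable]: "ind_others t \<in> borel_measurable borel"
  unfolding ind_others_def by measurable

lemma open_collision_set: "open (collision_set t)"
proof -
  have "collision_set t = (\<Union>c\<in>set xs - {a}. \<Union>j::int.
      {z. \<bar>z - (c - a + j * P)\<bar> < t} \<union> {z. \<bar>z + (c - a + j * P)\<bar> < t})"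
    unfolding collision_set_def by blast
  then show ?thesis by (simp add: open_UN open_Un open_Collect_less continuous_intros)
qed

lemma collision_set_borel[measurable]: "collision_set t \<in> sets borel"
  using open_collision_set by auto

lemma collision_setI:
  assumes "x \<in> windows P a t" "y \<in> windows P c t" "c \<in> set xs" "c \<noteq> a"
  shows "y - x \<in> collision_set t" "x - y \<in> collision_set t"
proof -
  obtain k :: int where k: "a + k * P \<le> x" "x < a + k * P + t"
    using assms(1) unfolding windows_def by auto
  obtain j :: int where j: "c + j * P \<le> y" "y < c + j * P + t"
    using assms(2) unfolding windows_def by auto
  have e: "c - a + real_of_int (j - k) * P = (c + j * P) - (a + k * P)"
    by (simp add: left_diff_distrib)
  have "\<bar>(y - x) - (c - a + real_of_int (j - k) * P)\<bar> < t" "\<bar>(x - y) + (c - a + real_of_int (j - k) * P)\<bar> < t"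
    unfolding e using j k by linarith+
  then show "y - x \<in> collision_set t" "x - y \<in> collision_set t"
    unfolding collision_set_def using assms(3,4) by blast+
qed

lemma collision_set_mono:
  assumes "t \<le> t'" shows "collision_set t \<subseteq> collision_set t'"
proof
  fix z assume "z \<in> collision_set t"
  then obtain c j where c: "c \<in> set xs" "c \<noteq> a"
    and "\<bar>z - (c - a + real_of_int j * P)\<bar> < t \<or> \<bar>z + (c - a + real_of_int j * P)\<bar> < t"
    unfolding collision_set_def by blast
  then have "\<bar>z - (c - a + real_of_int j * P)\<bar> < t' \<or> \<bar>z + (c - a + real_of_int j * P)\<bar> < t'"
    using assms by linarith
  then show "z \<in> collision_set t'" unfolding collision_set_def using c by blast
qed

lemma collision_set_far:
  assumes "t \<le> g / 2" "z \<in> collision_set t"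
  shows "g / 2 \<le> \<bar>z\<bar>"
proof -
  obtain c j where c: "c \<in> set xs" "c \<noteq> a"
    and j: "\<bar>z - (c - a + real_of_int j * P)\<bar> < t \<or> \<bar>z + (c - a + real_of_int j * P)\<bar> < t"
    using assms(2) unfolding collision_set_def by blast
  have "g < \<bar>c + real_of_int j * P - a\<bar>" using gap[OF c(1)] c(2) by blast
  then show ?thesis using j assms(1) by linarith
qed

lemma ind_others_nonzero:
  assumes "ind_others t z \<noteq> 0"
  obtains c where "c \<in> set xs" "c \<noteq> a" "z \<in> windows P c t"
  using assms sum_list_indicator_eq_0_iff[where L="filter (\<lambda>c. c \<noteq> a) xs" and S="\<lambda>c. windows P c t"]
  unfolding ind_others_def by auto

lemma windows_error_le:
  "ind_a t x * (if ind_others t y = 0 then 0 else 1) + ind_a t y * (if ind_others t x = 0 then 0 else 1)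
     \<le> indicator (collision_set t) (y - x) * (ind_a t x + ind_others t x)"
proof -
  have x_side: "ind_a t x * (if ind_others t y = 0 then 0 else 1)
      \<le> indicator (collision_set t) (y - x) * ind_a t x"
  proof (cases "ind_a t x = 1 \<and> ind_others t y \<noteq> 0")
    case True
    then obtain c where "c \<in> set xs" "c \<noteq> a" "y \<in> windows P c t"
      using ind_others_nonzero by metis
    moreover have "x \<in> windows P a t"
      using True unfolding ind_a_def by (simp add: indicator_def split: if_splits)
    ultimately have "y - x \<in> collision_set t" by (intro collision_setI)
    then show ?thesis using True by simp
  next
    case False
    then show ?thesis using ind_a_01[of t x] by auto
  qed
  have y_side: "ind_a t y * (if ind_others t x = 0 then 0 else 1)
      \<le> indicator (collision_set t) (y - x) * ind_others t x"
  proof (cases "ind_a t y = 1 \<and> ind_others t x \<noteq> 0")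
    case True
    then obtain c where c: "c \<in> set xs" "c \<noteq> a" "x \<in> windows P c t"
      using ind_others_nonzero by metis
    then have "1 \<le> ind_others t x"
      unfolding ind_others_def by (intro sum_list_indicator_ge_1[where c=c]) auto
    moreover have "y \<in> windows P a t"
      using True unfolding ind_a_def by (simp add: indicator_def split: if_splits)
    then have "y - x \<in> collision_set t" using c by (intro collision_setI)
    ultimately show ?thesis using True by auto
  next
    case False
    then show ?thesis using ind_a_01[of t y] ind_others_nonneg[of t x] by auto
  qed
  show ?thesis using x_side y_side by (simp add: distrib_left)
qed

lemma pointwise_le:
  assumes t: "0 \<le> t" "t < P"
  shows "\<bar>u_right t x - u_right t y\<bar> + \<bar>u_left t (x - t) - u_left t (y - t)\<bar>
     \<le> \<bar>u x - u y\<bar> + \<bar>u (x - t) - u (y - t)\<bar>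
        + 2 * indicator (collision_set t) (y - x) * (ind_a t x + ind_others t x)"
proof -
  define A where "A = u x - u y"
  define A' where "A' = u (x - t) - u (y - t)"
  have right: "u_right t x - u_right t y = A + (ind_a t x - ind_a t y)"
    unfolding A_def using u_right_eq[OF t] by simp
  have left: "u_left t (x - t) - u_left t (y - t) = A' - (ind_a t x - ind_a t y)"
    unfolding A'_def using u_left_eq[OF t] by simp
  have "A' = A + (ma * ind_a t x + ind_others t x) - (ma * ind_a t y + ind_others t y)"
    unfolding A'_def A_def using u_shift_eq[OF t] by simp
  then have "\<bar>A + (ind_a t x - ind_a t y)\<bar> + \<bar>A' - (ind_a t x - ind_a t y)\<bar> \<le> \<bar>A\<bar> + \<bar>A'\<bar>
      + 2 * (ind_a t x * (if ind_others t y = 0 then 0 else 1))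
      + 2 * (ind_a t y * (if ind_others t x = 0 then 0 else 1))"
    by (rule abs_transfer_le[OF ind_a_01 ind_a_01 ind_others_nonneg ind_others_nonneg ma_ge_2])
  moreover have "2 * indicator (collision_set t) (y - x) * (ind_a t x + ind_others t x)
      = 2 * (indicator (collision_set t) (y - x) * (ind_a t x + ind_others t x))"
    by simp
  ultimately show ?thesis
    using windows_error_le[of t x y] unfolding right left A_def[symmetric] A'_def[symmetric] by linarith
qed

lemma notin_windows_a:
  assumes t: "0 < t" "t \<le> g / 4" and y: "a + g / 2 \<le> y" "y < a + g"
  shows "y \<notin> windows P a t"
proof
  assume "y \<in> windows P a t"
  then obtain k :: int where k: "a + k * P \<le> y" "y < a + k * P + t" unfolding windows_def by auto
  show False
  proof (cases "k = 0")
    case True then show False using k t y by simp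
  next
    case False
    then have "g < \<bar>real_of_int k * P\<bar>" using gap[OF a_in, of k] by simp
    then show False using k t y by linarith
  qed
qed

lemma notin_windows_other:
  assumes t: "0 < t" "t \<le> g / 4" and y: "a + g / 2 \<le> y" "y < a + g"
    and c: "c \<in> set xs" "c \<noteq> a"
  shows "y \<notin> windows P c t"
proof
  assume "y \<in> windows P c t"
  then obtain k :: int where k: "c + k * P \<le> y" "y < c + k * P + t" unfolding windows_def by auto
  have "g < \<bar>c + real_of_int k * P - a\<bar>" using gap[OF c(1), of k] c by simp
  then show False using k t y by linarith
qed

lemma cell_const_gap:
  assumes x: "a \<le> x" and xy: "x \<le> y" and y: "y < a + g" and c: "c \<in> set xs"
  shows "cell P c y = cell P c x"
proof -
  define k where "k = cell P c x"
  have k1: "c + k * P \<le> x" and k2: "x < c + (k + 1) * P"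
    using cell_bounds[OF P_pos, where c=c and x=x] unfolding k_def by auto
  have "y < c + (real_of_int k + 1) * P"
  proof (rule ccontr)
    assume "\<not> y < c + (real_of_int k + 1) * P"
    then have d: "x - a < c + real_of_int (k + 1) * P - a" "c + real_of_int (k + 1) * P - a < g"
      using k2 y by auto
    show False
    proof (cases "c \<noteq> a \<or> k + 1 \<noteq> 0")
      case True
      then have "g < \<bar>c + real_of_int (k + 1) * P - a\<bar>" using gap[OF c] by blast
      then show False using d x by linarith
    next
      case False
      then show False using d x by simp
    qed
  qed
  then have "cell P c y = k" using k1 xy by (intro cell_eqI[OF P_pos]) auto
  then show ?thesis unfolding k_def .
qed

lemma u_diff_gap:
  assumes "a \<le> x" "x \<le> y" "y < a + g"
  shows "u x - u y = x - y"
proof -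
  have "(\<Sum>c\<leftarrow>xs. real_of_int (cell P c x)) = (\<Sum>c\<leftarrow>xs. real_of_int (cell P c y))"
    using cell_const_gap[OF assms] by (intro arg_cong[where f=sum_list] map_cong) auto
  then show ?thesis unfolding u_conf_cell by simp
qed

lemma pointwise_gain:
  assumes t: "0 < t" "t \<le> g / 4" and x: "a \<le> x" "x < a + t" and y: "a + g / 2 \<le> y" "y < a + g"
  shows "\<bar>u_right t x - u_right t y\<bar> + \<bar>u_left t (x - t) - u_left t (y - t)\<bar> + g / 2
     \<le> \<bar>u x - u y\<bar> + \<bar>u (x - t) - u (y - t)\<bar>"
proof -
  have t': "0 \<le> t" "t < P" using t g_less_P by auto
  have cx: "ind_a t x = 1"
  proof -
    have "x \<in> windows P a t" unfolding windows_def using x by (auto intro!: exI[of _ 0])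
    then show ?thesis unfolding ind_a_def by simp
  qed
  have cy: "ind_a t y = 0" using notin_windows_a[OF t y] unfolding ind_a_def by simp
  have oy: "ind_others t y = 0" unfolding ind_others_def sum_list_indicator_eq_0_iff
    using notin_windows_other[OF t y] by auto
  define A where "A = u x - u y"
  define A' where "A' = u (x - t) - u (y - t)"
  have xy: "x \<le> y" using x y t by linarith
  have A: "A = x - y" unfolding A_def by (rule u_diff_gap) (use x xy y in auto)
  have right: "u_right t x - u_right t y = A + 1" unfolding A_def using u_right_eq[OF t'] cx cy by simp
  have left: "u_left t (x - t) - u_left t (y - t) = A' - 1"
    unfolding A'_def using u_left_eq[OF t'] cx cy by simp
  have AA: "A' = A + (ma + ind_others t x)"
    unfolding A'_def A_def using u_shift_eq[OF t', of x] u_shift_eq[OF t', of y] cx cy oy by simp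
  have "\<bar>A + 1\<bar> + \<bar>A' - 1\<bar> \<le> \<bar>A\<bar> + \<bar>A'\<bar> + 2 * A"
    by (rule abs_transfer_gain[OF ind_others_nonneg ma_ge_2 AA]) (use A x y g xy in auto)
  moreover have "2 * A \<le> - (g / 2)" using A x y t by linarith
  ultimately show ?thesis unfolding right left A_def[symmetric] A'_def[symmetric] by linarith
qed

lemma pointwise_estimate:
  assumes t: "0 < t" "t \<le> g / 4"
  shows "\<bar>u_right t x - u_right t y\<bar> + \<bar>u_left t (x - t) - u_left t (y - t)\<bar>
      + g / 2 * indicator {a..<a+t} x * indicator {a + g/2..<a+g} y
     \<le> \<bar>u x - u y\<bar> + \<bar>u (x - t) - u (y - t)\<bar>
      + 2 * indicator (collision_set t) (y - x) * (ind_a t x + ind_others t x)"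
proof (cases "x \<in> {a..<a+t} \<and> y \<in> {a + g/2..<a+g}")
  case True
  have "0 \<le> 2 * indicator (collision_set t) (y - x) * (ind_a t x + ind_others t x)"
    using ind_a_01[of t x] ind_others_nonneg[of t x] by auto
  then show ?thesis using pointwise_gain[OF t, of x y] True by simp
next
  case False
  have tP: "0 \<le> t" "t < P" using t g_less_P by auto
  from False have "g / 2 * indicator {a..<a+t} x * indicator {a + g/2..<a+g} y = (0::real)"
    by (auto simp: indicator_def)
  then show ?thesis using pointwise_le[OF tP, of x y] by linarith
qed

definition gain :: "real \<Rightarrow> ennreal" where
  "gain t = iterated_integral {0..P}
     (\<lambda>x y. g / 2 * indicator {a..<a+t} x * indicator {a + g/2..<a+g} y / \<bar>x - y\<bar> powr (1 + s))"

definition loss :: "real \<Rightarrow> ennreal" where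
  "loss t = iterated_integral {0..P}
     (\<lambda>x y. 2 * indicator (collision_set t) (y - x) * (ind_a t x + ind_others t x) / \<bar>x - y\<bar> powr (1 + s))"

lemma energy_competitors_le:
  assumes t: "0 < t" "t \<le> g / 4"
  shows "energy s P (u_right t) + energy s P (u_left t) + gain t \<le> energy s P u + energy s P u + loss t"
proof -
  have tP: "0 \<le> t" "t \<le> P" using t g_less_P by auto
  let ?I = "iterated_integral {0..P}"
  have add3: "?I (\<lambda>x y. f1 x y + f2 x y + f3 x y) = ?I f1 + ?I f2 + ?I f3"
    if m: "(\<lambda>(x, y). f1 x y) \<in> borel_measurable (lborel \<Otimes>\<^sub>M lborel)"
      "(\<lambda>(x, y). f2 x y) \<in> borel_measurable (lborel \<Otimes>\<^sub>M lborel)"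
      "(\<lambda>(x, y). f3 x y) \<in> borel_measurable (lborel \<Otimes>\<^sub>M lborel)"
      and nn: "\<And>x y. 0 \<le> f1 x y" "\<And>x y. 0 \<le> f2 x y" "\<And>x y. 0 \<le> f3 x y" for f1 f2 f3
    using iterated_integral_add3[OF m _ nn] by simp
  have left: "energy s P (u_left t)
      = ?I (\<lambda>x y. \<bar>u_left t (x - t) - u_left t (y - t)\<bar> / \<bar>x - y\<bar> powr (1 + s))"
    by (rule energy_shift[symmetric]) (use u_left_periodic tP in auto)
  have shifted: "?I (\<lambda>x y. \<bar>u (x - t) - u (y - t)\<bar> / \<bar>x - y\<bar> powr (1 + s)) = energy s P u"
    by (rule energy_shift) (use u_periodic tP in auto)
  have loss_nonneg: "0 \<le> 2 * indicator (collision_set t) (y - x) * (ind_a t x + ind_others t x)" for x y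
    using ind_a_01[of t x] ind_others_nonneg[of t x] by auto
  have "energy s P (u_right t) + energy s P (u_left t) + gain t
      = ?I (\<lambda>x y. \<bar>u_right t x - u_right t y\<bar> / \<bar>x - y\<bar> powr (1 + s)
          + \<bar>u_left t (x - t) - u_left t (y - t)\<bar> / \<bar>x - y\<bar> powr (1 + s)
          + g / 2 * indicator {a..<a+t} x * indicator {a + g/2..<a+g} y / \<bar>x - y\<bar> powr (1 + s))"
    unfolding left unfolding energy_def gain_def
    by (rule add3[symmetric]) (measurable, measurable, measurable, use g in auto)
  also have "\<dots> \<le> ?I (\<lambda>x y. \<bar>u x - u y\<bar> / \<bar>x - y\<bar> powr (1 + s)
          + \<bar>u (x - t) - u (y - t)\<bar> / \<bar>x - y\<bar> powr (1 + s)
          + 2 * indicator (collision_set t) (y - x) * (ind_a t x + ind_others t x) / \<bar>x - y\<bar> powr (1 + s))"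
    by (rule iterated_integral_mono)
      (use divide_right_mono[OF pointwise_estimate[OF t]] in \<open>simp add: add_divide_distrib\<close>)
  also have "\<dots> = ?I (\<lambda>x y. \<bar>u x - u y\<bar> / \<bar>x - y\<bar> powr (1 + s))
      + ?I (\<lambda>x y. \<bar>u (x - t) - u (y - t)\<bar> / \<bar>x - y\<bar> powr (1 + s))
      + ?I (\<lambda>x y. 2 * indicator (collision_set t) (y - x) * (ind_a t x + ind_others t x) / \<bar>x - y\<bar> powr (1 + s))"
    by (rule add3) (measurable, measurable, measurable, use loss_nonneg in auto)
  also have "\<dots> = energy s P u + energy s P u + loss t"
    unfolding shifted by (simp add: energy_def loss_def)
  finally show ?thesis .
qed

lemma gain_ge:
  assumes t: "0 < t" "t \<le> g / 4" and at: "a + t \<le> P"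
  shows "ennreal (g / 2 / g powr (1 + s) * (g / 2) * t) \<le> gain t"
proof -
  define \<kappa> where "\<kappa> = g / 2 / g powr (1 + s)"
  have \<kappa>_nonneg: "0 \<le> \<kappa>" unfolding \<kappa>_def using g by simp
  have inner: "ennreal (\<kappa> * (g / 2)) * indicator {a..<a+t} x
      \<le> indicator {0..P} x * (\<integral>\<^sup>+y. ennreal (g / 2 * indicator {a..<a+t} x
          * indicator {a + g/2..<a+g} y / \<bar>x - y\<bar> powr (1 + s)) \<partial>lborel)" for x
  proof (cases "x \<in> {a..<a+t}")
    case True
    have "ennreal (\<kappa> * (g / 2)) = (\<integral>\<^sup>+y. ennreal \<kappa> * indicator {a + g/2..<a+g} y \<partial>lborel)"
      using g \<kappa>_nonneg by (simp add: nn_integral_cmult_indicator ennreal_mult[symmetric])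
    also have "\<dots> \<le> (\<integral>\<^sup>+y. ennreal (g / 2 * indicator {a..<a+t} x * indicator {a + g/2..<a+g} y
        / \<bar>x - y\<bar> powr (1 + s)) \<partial>lborel)"
    proof (intro nn_integral_mono)
      fix y
      show "ennreal \<kappa> * indicator {a + g/2..<a+g} y
          \<le> ennreal (g / 2 * indicator {a..<a+t} x * indicator {a + g/2..<a+g} y / \<bar>x - y\<bar> powr (1 + s))"
      proof (cases "y \<in> {a + g/2..<a+g}")
        case y: True
        have d: "0 < \<bar>x - y\<bar>" "\<bar>x - y\<bar> \<le> g" using True y t by auto
        then have "\<bar>x - y\<bar> powr (1 + s) \<le> g powr (1 + s)" by (intro powr_mono2) (use s in auto)
        then have "\<kappa> \<le> g / 2 / \<bar>x - y\<bar> powr (1 + s)"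
          unfolding \<kappa>_def using g d by (intro divide_left_mono) auto
        then show ?thesis using True y by (simp add: ennreal_leI)
      qed simp
    qed
    finally show ?thesis using True a_range at by simp
  qed simp
  have "ennreal (\<kappa> * (g / 2) * t) = (\<integral>\<^sup>+x. ennreal (\<kappa> * (g / 2)) * indicator {a..<a+t} x \<partial>lborel)"
    using g t \<kappa>_nonneg by (simp add: nn_integral_cmult_indicator ennreal_mult[symmetric])
  also have "\<dots> \<le> gain t"
    unfolding gain_def iterated_integral_def by (intro nn_integral_mono inner)
  finally show ?thesis unfolding \<kappa>_def .
qed

definition collision_mass :: "real \<Rightarrow> ennreal" where
  "collision_mass t = (\<integral>\<^sup>+z. ennreal (indicator (collision_set t) z / \<bar>z\<bar> powr (1 + s)) \<partial>lborel)"

lemma nn_integral_collision_kernel: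
  "(\<integral>\<^sup>+y. ennreal (indicator (collision_set t) (y - x) / \<bar>x - y\<bar> powr (1 + s)) \<partial>lborel)
    = collision_mass t"
proof -
  have "(\<integral>\<^sup>+y. ennreal (indicator (collision_set t) (y - x) / \<bar>x - y\<bar> powr (1 + s)) \<partial>lborel)
      = (\<integral>\<^sup>+z. ennreal (indicator (collision_set t) (z + x - x) / \<bar>x - (z + x)\<bar> powr (1 + s)) \<partial>lborel)"
    by (rule nn_integral_lborel_translate) measurable
  then show ?thesis unfolding collision_mass_def by simp
qed

lemma loss_le:
  assumes t: "0 < t" "t \<le> g / 4"
  shows "loss t \<le> collision_mass t * ennreal (6 * t * (1 + real T))"
proof -
  have tP: "0 \<le> t" "t \<le> P" using t g_less_P by auto
  define N where "N x = (\<Sum>c\<leftarrow>a # filter (\<lambda>c. c \<noteq> a) xs. indicator (windows P c t) x :: real)" for x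
  have N_eq: "ind_a t x + ind_others t x = N x" for x unfolding N_def ind_a_def ind_others_def by simp
  have N_nonneg: "0 \<le> N x" for x unfolding N_def by (rule sum_list_indicator_nonneg)
  have inner: "(\<integral>\<^sup>+y. ennreal (2 * indicator (collision_set t) (y - x) * (ind_a t x + ind_others t x)
      / \<bar>x - y\<bar> powr (1 + s)) \<partial>lborel) = ennreal (2 * N x) * collision_mass t" for x
  proof -
    have "(\<integral>\<^sup>+y. ennreal (2 * indicator (collision_set t) (y - x) * (ind_a t x + ind_others t x)
        / \<bar>x - y\<bar> powr (1 + s)) \<partial>lborel)
        = (\<integral>\<^sup>+y. ennreal (2 * N x) * ennreal (indicator (collision_set t) (y - x)
          / \<bar>x - y\<bar> powr (1 + s)) \<partial>lborel)"
      using N_nonneg[of x] unfolding N_eq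
      by (intro nn_integral_cong) (simp add: ennreal_mult''[symmetric] algebra_simps)
    also have "\<dots> = ennreal (2 * N x) * collision_mass t"
      unfolding nn_integral_collision_kernel[of t x, symmetric] by (rule nn_integral_cmult) measurable
    finally show ?thesis .
  qed
  have "loss t = (\<integral>\<^sup>+x. collision_mass t * (ennreal 2 * (indicator {0..P} x * ennreal (N x))) \<partial>lborel)"
    unfolding loss_def iterated_integral_def inner using N_nonneg
    by (intro nn_integral_cong) (simp add: ennreal_mult'' mult_ac)
  also have "\<dots> = collision_mass t * (ennreal 2 * (\<integral>\<^sup>+x. indicator {0..P} x * ennreal (N x) \<partial>lborel))"
    by (simp add: nn_integral_cmult N_def)
  also have "\<dots> \<le> collision_mass t * (ennreal 2 * ennreal (3 * t * (1 + real T)))"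
  proof -
    have "(\<integral>\<^sup>+x. indicator {0..P} x * ennreal (N x) \<partial>lborel)
        \<le> ennreal (3 * t * real (length (a # filter (\<lambda>c. c \<noteq> a) xs)))"
      unfolding N_def by (rule nn_integral_sum_windows_le[OF P_pos tP])
    also have "\<dots> \<le> ennreal (3 * t * (1 + real T))"
      using length_filter_le[of "\<lambda>c. c \<noteq> a" xs] length_xs tP by (intro ennreal_leI mult_left_mono) auto
    finally show ?thesis by (intro mult_left_mono) auto
  qed
  also have "ennreal 2 * ennreal (3 * t * (1 + real T)) = ennreal (6 * t * (1 + real T))"
    by (subst ennreal_mult[symmetric]) (use tP in auto)
  finally show ?thesis .
qed

subsection \<open>The collision mass vanishes as \<open>t \<rightarrow> 0\<close>\<close>

definition collision_points :: "real set" where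
  "collision_points = {z. \<exists>c\<in>set xs. c \<noteq> a \<and> (\<exists>j::int. z = c - a + j * P \<or> z = - (c - a + j * P))}"

lemma countable_collision_points: "countable collision_points"
proof -
  have "collision_points \<subseteq> (\<Union>c\<in>set xs. \<Union>j::int. {c - a + j * P, - (c - a + j * P)})"
    unfolding collision_points_def by blast
  moreover have "countable (\<Union>c\<in>set xs. \<Union>j::int. {c - a + j * P, - (c - a + j * P)})"
    by (intro countable_UN) (auto intro: countable_finite)
  ultimately show ?thesis by (rule countable_subset)
qed

lemma collision_point_escape:
  assumes "z \<notin> collision_points" "c \<in> set xs" "c \<noteq> a"
  shows "\<exists>\<delta>>0. \<forall>j::int. \<delta> \<le> \<bar>z - (c - a + j * P)\<bar> \<and> \<delta> \<le> \<bar>z + (c - a + j * P)\<bar>"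
proof -
  have ne: "z \<noteq> c - a + j * P" "z \<noteq> - (c - a + j * P)" for j :: int
    using assms unfolding collision_points_def by blast+
  obtain \<delta>1 where \<delta>1: "\<delta>1 > 0" "\<And>j::int. \<delta>1 \<le> \<bar>z - (c - a + j * P)\<bar>"
    using dist_lattice_pos[OF P_pos, of z "c - a"] ne(1) by blast
  obtain \<delta>2 where \<delta>2: "\<delta>2 > 0" "\<And>j::int. \<delta>2 \<le> \<bar>- z - (c - a + j * P)\<bar>"
    using dist_lattice_pos[OF P_pos, of "- z" "c - a"] ne(2) by (metis minus_minus)
  have "\<bar>- z - (c - a + j * P)\<bar> = \<bar>z + (c - a + j * P)\<bar>" for j :: int by arith
  then have "min \<delta>1 \<delta>2 \<le> \<bar>z - (c - a + j * P)\<bar> \<and> min \<delta>1 \<delta>2 \<le> \<bar>z + (c - a + j * P)\<bar>" for j :: int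
    using \<delta>1(2)[of j] \<delta>2(2)[of j] by linarith
  then show ?thesis using \<delta>1(1) \<delta>2(1) by (intro exI[of _ "min \<delta>1 \<delta>2"]) simp
qed

lemma collision_set_escape:
  assumes "z \<notin> collision_points"
  shows "\<exists>\<delta>>0. z \<notin> collision_set \<delta>"
proof -
  obtain \<delta>c where \<delta>c: "\<And>c. c \<in> set xs - {a} \<Longrightarrow>
      \<delta>c c > 0 \<and> (\<forall>j::int. \<delta>c c \<le> \<bar>z - (c - a + j * P)\<bar> \<and> \<delta>c c \<le> \<bar>z + (c - a + j * P)\<bar>)"
    using collision_point_escape[OF assms] by (metis Diff_iff insertI1)
  define \<delta> where "\<delta> = Min (insert 1 (\<delta>c ` (set xs - {a})))"
  have fin: "finite (insert 1 (\<delta>c ` (set xs - {a})))" by simp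
  have "\<delta> > 0" unfolding \<delta>_def using \<delta>c fin by (subst Min_gr_iff) auto
  moreover have "z \<notin> collision_set \<delta>"
  proof
    assume "z \<in> collision_set \<delta>"
    then obtain c j where c: "c \<in> set xs" "c \<noteq> a"
      and j: "\<bar>z - (c - a + real_of_int j * P)\<bar> < \<delta> \<or> \<bar>z + (c - a + real_of_int j * P)\<bar> < \<delta>"
      unfolding collision_set_def by blast
    have "\<delta> \<le> \<delta>c c" unfolding \<delta>_def using fin c by (intro Min_le) auto
    moreover have "\<delta>c c \<le> \<bar>z - (c - a + real_of_int j * P)\<bar>" "\<delta>c c \<le> \<bar>z + (c - a + real_of_int j * P)\<bar>"
      using \<delta>c[of c] c by auto
    ultimately show False using j by linarith
  qed
  ultimately show ?thesis by blast
qed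

lemma collision_mass_finite:
  assumes "t \<le> g / 2" shows "collision_mass t < \<infinity>"
proof -
  have "collision_mass t \<le> (\<integral>\<^sup>+z. ennreal (indicator {z. g / 2 \<le> \<bar>z\<bar>} z * \<bar>z\<bar> powr (- 1 - s)) \<partial>lborel)"
    unfolding collision_mass_def
  proof (intro nn_integral_mono)
    fix z
    have "1 / \<bar>z\<bar> powr (1 + s) = \<bar>z\<bar> powr (- 1 - s)"
      using powr_minus_divide[of "\<bar>z\<bar>" "1 + s"] by simp
    then show "ennreal (indicator (collision_set t) z / \<bar>z\<bar> powr (1 + s))
        \<le> ennreal (indicator {z. g / 2 \<le> \<bar>z\<bar>} z * \<bar>z\<bar> powr (- 1 - s))"
      using collision_set_far[OF assms, of z] by (auto simp: indicator_def)
  qed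
  also have "\<dots> < \<infinity>" by (rule nn_integral_abs_powr_tail_finite) (use s g in auto)
  finally show ?thesis .
qed

text \<open>Monotone convergence along \<open>t\<^sub>n = t\<^sub>0 / (n + 1)\<close>: the sets \<open>collision_set t\<^sub>n\<close> decrease to
  the countable set \<open>collision_points\<close>, which is null.\<close>
lemma collision_mass_small:
  assumes "0 < \<epsilon>" "0 < t1"
  shows "\<exists>t. 0 < t \<and> t \<le> g / 4 \<and> t \<le> t1 \<and> collision_mass t < ennreal \<epsilon>"
proof -
  define t0 where "t0 = min (g / 4) t1"
  have t0: "0 < t0" "t0 \<le> g / 4" "t0 \<le> t1" unfolding t0_def using g assms by auto
  define tn where "tn n = t0 / (real n + 1)" for n :: nat
  have tn: "0 < tn n" "tn n \<le> t0" for n unfolding tn_def using t0 by (auto simp: field_simps)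
  define f where "f n z = ennreal (indicator (collision_set (tn n)) z / \<bar>z\<bar> powr (1 + s))" for n z
  have f_meas[measurable]: "f n \<in> borel_measurable lborel" for n unfolding f_def by measurable
  have dec: "decseq f"
  proof (rule decseq_SucI, rule le_funI)
    fix n z
    have "tn (Suc n) \<le> tn n" unfolding tn_def using t0 by (simp add: frac_le)
    then show "f (Suc n) z \<le> f n z"
      unfolding f_def using collision_set_mono
      by (intro ennreal_leI divide_right_mono) (auto simp: indicator_def)
  qed
  have fin: "(\<integral>\<^sup>+z. f n z \<partial>lborel) < \<infinity>" for n
    using collision_mass_finite[of "tn n"] tn[of n] t0 g unfolding f_def collision_mass_def by simp
  have "(\<integral>\<^sup>+z. (INF n. f n z) \<partial>lborel) = 0"
  proof -
    have "AE z in lborel. z \<notin> collision_points"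
      using countable_imp_null_set_lborel[OF countable_collision_points] by (rule AE_not_in)
    then have "AE z in lborel. (INF n. f n z) = 0"
    proof eventually_elim
      case (elim z)
      obtain \<delta> where \<delta>: "\<delta> > 0" "z \<notin> collision_set \<delta>" using collision_set_escape[OF elim] by blast
      obtain n :: nat where "t0 / \<delta> < real n + 1"
        using reals_Archimedean2[of "t0 / \<delta>"] by (metis less_add_one order.strict_trans)
      then have "tn n \<le> \<delta>" unfolding tn_def using \<delta> t0 by (simp add: field_simps)
      then have "z \<notin> collision_set (tn n)" using collision_set_mono \<delta>(2) by blast
      then have "f n z = 0" unfolding f_def by simp
      then show ?case by (metis INF_lower UNIV_I antisym zero_le)
    qed
    then show ?thesis by (simp add: nn_integral_0_iff_AE)
  qed
  then have "(INF n. integral\<^sup>N lborel (f n)) < ennreal \<epsilon>"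
    using nn_integral_monotone_convergence_INF_decseq[OF dec f_meas fin] assms by simp
  then obtain n where "integral\<^sup>N lborel (f n) < ennreal \<epsilon>" by (auto simp: INF_less_iff)
  then show ?thesis using tn[of n] t0 unfolding collision_mass_def f_def by force
qed

lemma exists_loss_less_gain: "\<exists>t. 0 < t \<and> t \<le> g / 4 \<and> a + t < P \<and> loss t < gain t"
proof -
  define c0 where "c0 = g / 2 / g powr (1 + s) * (g / 2)"
  have c0: "0 < c0" unfolding c0_def using g by simp
  define \<epsilon> where "\<epsilon> = c0 / (6 * (1 + real T))"
  have "0 < \<epsilon>" unfolding \<epsilon>_def using c0 by simp
  moreover have "0 < (P - a) / 2" using a_range by simp
  ultimately obtain t where t: "0 < t" "t \<le> g / 4" "t \<le> (P - a) / 2"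
    and small: "collision_mass t < ennreal \<epsilon>"
    using collision_mass_small by blast
  have "2 * t \<le> P - a" using t(3) by (simp add: field_simps)
  then have at: "a + t < P" using t a_range by linarith
  have "loss t \<le> collision_mass t * ennreal (6 * t * (1 + real T))" by (rule loss_le[OF t(1,2)])
  also have "\<dots> < ennreal \<epsilon> * ennreal (6 * t * (1 + real T))"
    by (rule ennreal_mult_strict_right_mono[OF small]) (use t in auto)
  also have "\<dots> = ennreal (c0 * t)"
  proof -
    have "\<epsilon> * (6 * t * (1 + real T)) = c0 * t" unfolding \<epsilon>_def by (simp add: field_simps)
    moreover have "ennreal \<epsilon> * ennreal (6 * t * (1 + real T)) = ennreal (\<epsilon> * (6 * t * (1 + real T)))"
      using \<open>0 < \<epsilon>\<close> by (simp add: ennreal_mult')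
    ultimately show ?thesis by (simp only:)
  qed
  also have "\<dots> \<le> gain t" unfolding c0_def by (rule gain_ge) (use t at in auto)
  finally show ?thesis using t at by blast
qed

lemma exists_better_competitor:
  "\<exists>t. 0 < t \<and> a + t < P \<and> (F1 s T (xs_right t) < F1 s T xs \<or> F1 s T (xs_left t) < F1 s T xs)"
proof -
  obtain t where t: "0 < t" "t \<le> g / 4" "a + t < P" and "loss t < gain t"
    using exists_loss_less_gain by blast
  have fin: "energy s P u < \<infinity>" by (rule energy_finite) (use s T_pos length_xs in auto)
  have "energy s P (u_right t) < energy s P u \<or> energy s P (u_left t) < energy s P u"
  proof (rule ccontr)
    assume "\<not> ?thesis"
    then have "energy s P u + energy s P u + gain t \<le> energy s P (u_right t) + energy s P (u_left t) + gain t"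
      by (intro add_mono) auto
    also have "\<dots> \<le> energy s P u + energy s P u + loss t" by (rule energy_competitors_le[OF t(1,2)])
    finally have "gain t \<le> loss t" using fin by (auto simp: ennreal_add_left_cancel_le)
    then show False using \<open>loss t < gain t\<close> by simp
  qed
  then show ?thesis using t unfolding F1_eq_energy by blast
qed

lemma config_xs_right: "0 < t \<Longrightarrow> a + t < P \<Longrightarrow> config T (xs_right t)"
  unfolding xs_right_def by (rule config_insort[OF cfg a_in]) (use a_range in auto)

lemma config_xs_left: "0 < t \<Longrightarrow> t < P \<Longrightarrow> config T (xs_left t)"
  unfolding xs_left_def a_left_def by (rule config_insort[OF cfg a_in]) (use a_range in auto)

lemma mult_xs_right: "0 < t \<Longrightarrow> mult (xs_right t) a = mult xs a - 1"
  unfolding xs_right_def by (rule mult_insort[OF a_in]) auto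

lemma mult_xs_left: "0 < t \<Longrightarrow> t < P \<Longrightarrow> mult (xs_left t) a = mult xs a - 1"
  unfolding xs_left_def a_left_def by (rule mult_insort[OF a_in]) auto

end

theorem mainTheorem7:
  fixes s :: real and T :: nat and xs :: "real list" and i :: nat
  assumes "0 < s" and "s < 1"
    and "config T xs"
    and "1 \<le> i" and "i \<le> T"
    and "mult xs (xs ! (i - 1)) > 1"
  shows "\<exists>xs'. config T xs' \<and> mult xs' (xs ! (i - 1)) = mult xs (xs ! (i - 1)) - 1
              \<and> F1 s T xs > F1 s T xs'"
proof -
  define a where "a = xs ! (i - 1)"
  have a_in: "a \<in> set xs"
    unfolding a_def using assms(3-5) by (intro nth_mem) (auto simp: config_def)
  obtain g where "0 < g" "g \<le> 1"
    and "\<And>c k. c \<in> set xs \<Longrightarrow> c \<noteq> a \<or> k \<noteq> 0 \<Longrightarrow> g < \<bar>c + real_of_int k * real T - a\<bar>"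
    using isolated_point_gap[OF assms(3) a_in] by blast
  then interpret multiple_point s T xs a g
    using assms(1-3,6) a_in unfolding a_def by unfold_locales auto
  obtain t where t: "0 < t" "a + t < real T"
    and better: "F1 s T (xs_right t) < F1 s T xs \<or> F1 s T (xs_left t) < F1 s T xs"
    using exists_better_competitor by blast
  have "t < real T" using t a_range by linarith
  then show ?thesis
    using better config_xs_right[OF t] config_xs_left[OF t(1)] mult_xs_right[OF t(1)] mult_xs_left[OF t(1)]
    unfolding a_def by blast
qed

end
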